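(* Consider the ROSS algorithm described in the context and suppose Assumptions (A1), (A2), (A3) hold. Let $\bar{\mathbf{G}}^{[t]}=[\bar g^{[t]}_1,\dots,\bar g^{[t]}_N]$ and $\mathbf{G}^{[t]}=[g^{[t]}_{1,1},\dots,g^{[t]}_{N,N}]$ be the $d\times N$ matrices with these columns, and $\|\cdot\|_{F}$ the Frobenius norm. Then for every round $t\ge1$, $$\mathbb{E}\left[\left\|\bar{\mathbf{G}}^{[t]}-\mathbf{G}^{[t]}\right\|_F^2\right]\le\frac{2N\sigma^2}{\omega_{min}^4}+2N\sigma^2+\frac{8N\varsigma^2}{\omega_{min}^4}+8N\varsigma^2+\left(\frac{16L^2}{\omega_{min}^4}+16L^2\right)\sum_{i=1}^N\mathbb{E}\left[\left\|x^{[t-1]}_i-\bar x^{[t-1]}\right\|^2\right]+\left(\frac{8N}{\omega_{min}^4}+8N\right)\mathbb{E}\left[\left\|\frac1N\sum_{i=1}^N\nabla f_i\left(x^{[t-1]}_i\right)\right\|^2\right].$$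
   Context: Setting: $N\ge1$ agents $\mathcal{N}=\{1,\dots,N\}$. $\mathbf{W}=(\omega_{i,j})\in[0,1]^{N\times N}$ is a symmetric doubly stochastic matrix ($\omega_{i,j}=\omega_{j,i}$, $\sum_{j}\omega_{i,j}=1$). $\mathcal{N}_i=\{j\in\mathcal{N}:\omega_{i,j}>0\}$ is the neighborhood of agent $i$ (the algorithm treats $i$ itself as a member of $\mathcal{N}_i$), and $\omega_{min}=\min_{i\in\mathcal{N},j\in\mathcal{N}_i}\omega_{i,j}$. Agent $i$ has a data distribution $\mathcal{D}_i$; $F(x;\xi)$ is a real-valued loss, differentiable in $x\in\mathbb{R}^d$; $f_i(x)=\mathbb{E}_{\xi\sim\mathcal{D}_i}[F(x;\xi)]$ and $\mathcal{F}(x)=\frac1N\sum_{i=1}^N f_i(x)$. A finite validation set $\mathcal{Q}$ is available to every agent, and $J(\xi;x)$ denotes the accuracy of model $x$ on sample $\xi$. Algorithm ROSS (learning rate $\gamma>0$, momentum coefficient $\alpha$): all agents start from a common point $x_i^{[0]}=x^{[0]}$ with $u_i^{[0]}=0$. In each round $t=1,2,\dots$, each agent $i$ draws a sample $\xi_{i,t}\sim\mathcal{D}_i$ (independently across agents and rounds) and for each $j\in\mathcal{N}_i$ computes $g^{[t]}_{i,j}=\nabla F(x^{[t-1]}_j;\xi_{i,t})$ (so $g^{[t]}_{i,i}$ is its local stochastic gradient). Agent $i$ then sets $x^{[t]}_{i,j}=x^{[t-1]}_i-\gamma g^{[t]}_{j,i}$ for $j\in\mathcal{N}_i$; for $\mathcal{N}'\subseteq\mathcal{N}_i$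 it defines $v(\mathcal{N}')=\frac{1}{|\mathcal{Q}|}\sum_{\xi\in\mathcal{Q}}J\big(\xi;\frac{1}{|\mathcal{N}'|}\sum_{j\in\mathcal{N}'}x^{[t]}_{i,j}\big)$ ($v(\emptyset)=0$); Shapley values $\varphi^{[t]}_{i,j}=\sum_{\mathcal{N}'\subseteq\mathcal{N}_i\setminus\{j\}}\frac{v(\mathcal{N}'\cup\{j\})-v(\mathcal{N}')}{|\mathcal{N}_i|\binom{|\mathcal{N}_i|-1}{|\mathcal{N}'|}}$; normalized values $\hat\varphi^{[t]}_{i,j}=\frac{\varphi^{[t]}_{i,j}-\min_{k\in\mathcal{N}_i}\varphi^{[t]}_{i,k}}{\max_{k\in\mathcal{N}_i}\varphi^{[t]}_{i,k}-\min_{k\in\mathcal{N}_i}\varphi^{[t]}_{i,k}}$; weights $\pi^{[t]}_{i,j}=\frac{\hat\varphi^{[t]}_{i,j}}{\omega_{i,j}\sum_{k\in\mathcal{N}_i}\hat\varphi^{[t]}_{i,k}}$; then $\bar g^{[t]}_i=\sum_{j\in\mathcal{N}_i}\pi^{[t]}_{i,j}g^{[t]}_{j,i}$, $\hat u^{[t]}_i=\alpha u^{[t-1]}_i+\bar g^{[t]}_i$, $\hat x^{[t]}_i=x^{[t-1]}_i-\gamma\hat u^{[t]}_i$, $u^{[t]}_i=\sum_{j\in\mathcal{N}_i}\omega_{i,j}\hat u^{[t]}_j$, $x^{[t]}_i=\sum_{j\in\mathcal{N}_i}\omega_{i,j}\hat x^{[t]}_j$. Write $\bar x^{[t]}=\frac1N\sum_{i=1}^N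 x^{[t]}_i$. Expectations are over the random samples. Assumptions: (A1) each $f_i$ is $L$-smooth. (A2) there exist $\sigma>0,\varsigma>0$ with $\mathbb{E}_{\xi\sim\mathcal{D}_i}\|\nabla F(x;\xi)-\nabla f_i(x)\|^2\le\sigma^2$ and $\|\nabla f_i(x)-\nabla\mathcal{F}(x)\|^2\le\varsigma^2$ for all $x$ and all $i$. (A3) with $\lambda_k(\mathbf{W})$ the $k$-th largest eigenvalue of $\mathbf{W}$, $\lambda_1(\mathbf{W})=1$ and $\max\{|\lambda_2(\mathbf{W})|,|\lambda_N(\mathbf{W})|\}\le\sqrt{\rho}$ for some constant $\rho<1$. *)

theory Defs
  imports "HOL-Analysis.Analysis" "HOL-Probability.Probability"
begin

definition grad :: "('a::real_inner \<Rightarrow> real) \<Rightarrow> 'a \<Rightarrow> 'a" where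
  "grad f x = (SOME g. (f has_derivative (\<lambda>h. g \<bullet> h)) (at x))"

definition L_smooth :: "('a::real_inner \<Rightarrow> real) \<Rightarrow> real \<Rightarrow> bool" where
  "L_smooth f L \<longleftrightarrow> (\<forall>x. f differentiable (at x)) \<and>
     (\<forall>x y. norm (grad f x - grad f y) \<le> L * norm (x - y))"

definition doubly_stochastic_sym :: "real^'n^'n \<Rightarrow> bool" where
  "doubly_stochastic_sym W \<longleftrightarrow>
     (\<forall>i j. 0 \<le> W$i$j \<and> W$i$j \<le> 1) \<and> (\<forall>i j. W$i$j = W$j$i) \<and>
     (\<forall>i. (\<Sum>j\<in>UNIV. W$i$j) = 1)"

text \<open>lam is the list of eigenvalues of W (with multiplicity) in non-increasing order:
  lam ! (k-1) is the k-th largest eigenvalue.\<close>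
definition eigs_desc :: "real^'n^'n \<Rightarrow> real list \<Rightarrow> bool" where
  "eigs_desc W lam \<longleftrightarrow> length lam = CARD('n) \<and> sorted_wrt (\<lambda>a b. a \<ge> b) lam \<and>
     (\<forall>\<mu>::real. det (\<mu> *\<^sub>R mat 1 - W) = (\<Prod>k<CARD('n). \<mu> - lam ! k))"

definition spectral_gap :: "real^'n^'n \<Rightarrow> real \<Rightarrow> bool" where
  "spectral_gap W \<rho> \<longleftrightarrow> (\<exists>lam. eigs_desc W lam \<and> lam ! 0 = 1 \<and>
     (2 \<le> CARD('n) \<longrightarrow> max \<bar>lam ! 1\<bar> \<bar>lam ! (CARD('n) - 1)\<bar> \<le> sqrt \<rho>))"

definition nbr :: "real^'n^'n \<Rightarrow> 'n \<Rightarrow> 'n set" where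
  "nbr W i = {j. 0 < W$i$j} \<union> {i}"

definition omega_min :: "real^'n^'n \<Rightarrow> real" where
  "omega_min W = Min {W$i$j | i j. 0 < W$i$j}"

definition cols_mat :: "('n \<Rightarrow> real^'d) \<Rightarrow> real^'n^'d" where
  "cols_mat v = (\<chi> r. \<chi> c. v c $ r)"

definition frob_norm :: "real^'n^'d \<Rightarrow> real" where
  "frob_norm A = sqrt (\<Sum>r\<in>UNIV. \<Sum>c\<in>UNIV. (A$r$c)\<^sup>2)"

definition coal_val :: "('z \<Rightarrow> 'v::real_vector \<Rightarrow> real) \<Rightarrow> 'z set \<Rightarrow> ('n \<Rightarrow> 'v) \<Rightarrow> 'n set \<Rightarrow> real" where
  "coal_val J Q y S = (if S = {} then 0
     else (\<Sum>\<xi>\<in>Q. J \<xi> ((1 / real (card S)) *\<^sub>R (\<Sum>j\<in>S. y j))) / real (card Q))"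

definition shapley :: "('n set \<Rightarrow> real) \<Rightarrow> 'n set \<Rightarrow> 'n \<Rightarrow> real" where
  "shapley v M j = (\<Sum>S\<in>Pow (M - {j}).
     (v (S \<union> {j}) - v S) / (real (card M) * real ((card M - 1) choose card S)))"

definition shap_norm :: "('n \<Rightarrow> real) \<Rightarrow> 'n set \<Rightarrow> 'n \<Rightarrow> real" where
  "shap_norm \<phi> M j = (\<phi> j - Min (\<phi> ` M)) / (Max (\<phi> ` M) - Min (\<phi> ` M))"

definition sgrad :: "('v::real_inner \<Rightarrow> 'z \<Rightarrow> real) \<Rightarrow> 'v \<Rightarrow> 'z \<Rightarrow> 'v" where
  "sgrad F x \<xi> = grad (\<lambda>y. F y \<xi>) x"

text \<open>g_{i,j} = grad F(x_j; xi_i), where x is the previous iterate and s i the sample of agent i.\<close>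
definition ross_g :: "('v::real_inner \<Rightarrow> 'z \<Rightarrow> real) \<Rightarrow> ('n \<Rightarrow> 'v) \<Rightarrow> ('n \<Rightarrow> 'z) \<Rightarrow> 'n \<Rightarrow> 'n \<Rightarrow> 'v" where
  "ross_g F x s i j = sgrad F (x j) (s i)"

definition ross_loc :: "('v::real_inner \<Rightarrow> 'z \<Rightarrow> real) \<Rightarrow> real \<Rightarrow> ('n \<Rightarrow> 'v) \<Rightarrow> ('n \<Rightarrow> 'z) \<Rightarrow> 'n \<Rightarrow> 'n \<Rightarrow> 'v" where
  "ross_loc F \<gamma> x s i j = x i - \<gamma> *\<^sub>R ross_g F x s j i"

definition ross_phi :: "real^'n^'n \<Rightarrow> ('v::real_inner \<Rightarrow> 'z \<Rightarrow> real) \<Rightarrow> ('z \<Rightarrow> 'v \<Rightarrow> real) \<Rightarrow> 'z set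
    \<Rightarrow> real \<Rightarrow> ('n \<Rightarrow> 'v) \<Rightarrow> ('n \<Rightarrow> 'z) \<Rightarrow> 'n \<Rightarrow> 'n \<Rightarrow> real" where
  "ross_phi W F J Q \<gamma> x s i = shapley (coal_val J Q (ross_loc F \<gamma> x s i)) (nbr W i)"

definition ross_pi :: "real^'n^'n \<Rightarrow> ('v::real_inner \<Rightarrow> 'z \<Rightarrow> real) \<Rightarrow> ('z \<Rightarrow> 'v \<Rightarrow> real) \<Rightarrow> 'z set
    \<Rightarrow> real \<Rightarrow> ('n \<Rightarrow> 'v) \<Rightarrow> ('n \<Rightarrow> 'z) \<Rightarrow> 'n \<Rightarrow> 'n \<Rightarrow> real" where
  "ross_pi W F J Q \<gamma> x s i j =
     shap_norm (ross_phi W F J Q \<gamma> x s i) (nbr W i) j /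
     (W$i$j * (\<Sum>k\<in>nbr W i. shap_norm (ross_phi W F J Q \<gamma> x s i) (nbr W i) k))"

definition ross_gbar :: "real^'n^'n \<Rightarrow> ('v::real_inner \<Rightarrow> 'z \<Rightarrow> real) \<Rightarrow> ('z \<Rightarrow> 'v \<Rightarrow> real) \<Rightarrow> 'z set
    \<Rightarrow> real \<Rightarrow> ('n \<Rightarrow> 'v) \<Rightarrow> ('n \<Rightarrow> 'z) \<Rightarrow> 'n \<Rightarrow> 'v" where
  "ross_gbar W F J Q \<gamma> x s i =
     (\<Sum>j\<in>nbr W i. ross_pi W F J Q \<gamma> x s i j *\<^sub>R ross_g F x s j i)"

definition ross_step :: "real^'n^'n \<Rightarrow> ('v::real_inner \<Rightarrow> 'z \<Rightarrow> real) \<Rightarrow> ('z \<Rightarrow> 'v \<Rightarrow> real) \<Rightarrow> 'z set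
    \<Rightarrow> real \<Rightarrow> real \<Rightarrow> ('n \<Rightarrow> 'v) \<times> ('n \<Rightarrow> 'v) \<Rightarrow> ('n \<Rightarrow> 'z) \<Rightarrow> ('n \<Rightarrow> 'v) \<times> ('n \<Rightarrow> 'v)" where
  "ross_step W F J Q \<gamma> \<alpha> xu s =
     (let x = fst xu; u = snd xu;
          uh = (\<lambda>i. \<alpha> *\<^sub>R u i + ross_gbar W F J Q \<gamma> x s i);
          xh = (\<lambda>i. x i - \<gamma> *\<^sub>R uh i)
      in ((\<lambda>i. \<Sum>j\<in>nbr W i. W$i$j *\<^sub>R xh j), (\<lambda>i. \<Sum>j\<in>nbr W i. W$i$j *\<^sub>R uh j)))"

text \<open>State (x^t, u^t) after t rounds; xi t i is the sample drawn by agent i in round t.\<close>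
primrec ross_state :: "real^'n^'n \<Rightarrow> ('v::real_inner \<Rightarrow> 'z \<Rightarrow> real) \<Rightarrow> ('z \<Rightarrow> 'v \<Rightarrow> real) \<Rightarrow> 'z set
    \<Rightarrow> real \<Rightarrow> real \<Rightarrow> 'v \<Rightarrow> (nat \<Rightarrow> 'n \<Rightarrow> 'z) \<Rightarrow> nat \<Rightarrow> ('n \<Rightarrow> 'v) \<times> ('n \<Rightarrow> 'v)" where
  "ross_state W F J Q \<gamma> \<alpha> x0 \<xi> 0 = ((\<lambda>i. x0), (\<lambda>i. 0))"
| "ross_state W F J Q \<gamma> \<alpha> x0 \<xi> (Suc t) =
     ross_step W F J Q \<gamma> \<alpha> (ross_state W F J Q \<gamma> \<alpha> x0 \<xi> t) (\<xi> (Suc t))"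

text \<open>Sample space: one sample per (round, agent), independent, agent i's sample ~ D i.\<close>
definition sample_space :: "('n \<Rightarrow> 'z measure) \<Rightarrow> (nat \<times> 'n \<Rightarrow> 'z) measure" where
  "sample_space D = (\<Pi>\<^sub>M p\<in>UNIV. D (snd p))"

end

(* Cauchy-Schwarz, together with 0 <= pi_ij <= 1/omega_min and the fact that an agent has at most
   1/omega_min neighbours, bounds |gbar_i - g_ii|^2 pointwise by sum_j w_ij |g_ji|^2 with weights
   2/omega_min^3 on the neighbours of i and 2 on the diagonal.  The round-t samples are independent
   of x^(t-1), so E |g_ji|^2 = E h(x_i^(t-1)) with h(x) = E_xi |grad F(x; xi)|^2, and
   h(x) <= sigma^2 + |grad f_j(x)|^2.  This last step needs the mean of
   grad F(x; xi) . grad f_j(x) to be |grad f_j(x)|^2, i.e. differentiating f_j = E F under the integral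
   sign in the direction grad f_j(x): the symmetric difference quotients of F converge pointwise, and
   by the fundamental theorem of calculus, Cauchy-Schwarz and (A1), (A2) they are bounded in L^2, so
   their means converge as well.  Finally |grad f_j(x_i)|^2 is split by (A2) and (A1) into varsigma^2,
   the consensus error sum_i |x_i - xbar|^2 and the squared averaged gradient. *)

theory Submission
  imports Defs
begin

section \<open>Gradients and difference quotients\<close>

lemma grad_has_derivative:
  fixes f :: "'a::euclidean_space \<Rightarrow> real"
  assumes "f differentiable (at x)"
  shows "(f has_derivative (\<lambda>h. grad f x \<bullet> h)) (at x)"
proof -
  obtain D where D: "(f has_derivative D) (at x)"
    using assms differentiable_def by blast
  have "D = (\<lambda>h. adjoint D 1 \<bullet> h)"
    using adjoint_works[OF has_derivative_linear[OF D]] by (simp add: fun_eq_iff inner_commute)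
  with D have "(f has_derivative (\<lambda>h. adjoint D 1 \<bullet> h)) (at x)" by simp
  then show ?thesis
    unfolding grad_def by (rule someI)
qed

lemma grad_eqI:
  fixes f :: "'a::euclidean_space \<Rightarrow> real"
  assumes "(f has_derivative (\<lambda>h. g \<bullet> h)) (at x)"
  shows "grad f x = g"
proof -
  have "f differentiable (at x)"
    using assms differentiable_def by blast
  from has_derivative_unique[OF grad_has_derivative[OF this] assms]
  have "grad f x \<bullet> (grad f x - g) = g \<bullet> (grad f x - g)" by metis
  then have "(grad f x - g) \<bullet> (grad f x - g) = 0" by (simp add: inner_diff_left)
  then show ?thesis by simp
qed

lemma grad_scaled_sum:
  fixes f :: "'i \<Rightarrow> 'a::euclidean_space \<Rightarrow> real"
  assumes "\<And>i. i \<in> I \<Longrightarrow> f i differentiable (at x)"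
  shows "grad (\<lambda>y. c * (\<Sum>i\<in>I. f i y)) x = c *\<^sub>R (\<Sum>i\<in>I. grad (f i) x)"
proof (rule grad_eqI)
  have "((\<lambda>y. c * (\<Sum>i\<in>I. f i y)) has_derivative (\<lambda>h. c * (\<Sum>i\<in>I. grad (f i) x \<bullet> h))) (at x)"
    using assms by (intro has_derivative_mult_right has_derivative_sum grad_has_derivative)
  then show "((\<lambda>y. c * (\<Sum>i\<in>I. f i y)) has_derivative (\<lambda>h. (c *\<^sub>R (\<Sum>i\<in>I. grad (f i) x)) \<bullet> h)) (at x)"
    by (simp add: inner_sum_left)
qed

lemma has_real_derivative_along_line:
  fixes u :: "'a::euclidean_space \<Rightarrow> real"
  assumes "u differentiable (at (x + s *\<^sub>R e))"
  shows "((\<lambda>h. u (x + h *\<^sub>R e)) has_real_derivative (grad u (x + s *\<^sub>R e) \<bullet> e)) (at s)"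
proof -
  have "((\<lambda>h. x + h *\<^sub>R e) has_derivative (\<lambda>h. h *\<^sub>R e)) (at s)"
    by (auto intro!: derivative_eq_intros)
  from diff_chain_at[OF this grad_has_derivative[OF assms]]
  show ?thesis
    unfolding has_field_derivative_def comp_def
    by (rule has_derivative_eq_rhs) (simp add: fun_eq_iff)
qed

lemma borel_measurable_grad:
  assumes "L_smooth f L"
  shows "grad f \<in> borel_measurable borel"
proof (rule borel_measurable_continuous_onI, rule lipschitz_on_continuous_on)
  show "\<bar>L\<bar>-lipschitz_on UNIV (grad f)"
    using assms unfolding L_smooth_def lipschitz_on_def dist_norm
    by (auto intro: order_trans[OF _ mult_right_mono[OF abs_ge_self]])
qed

lemma DERIV_eventually_nonzero:
  fixes \<phi> :: "real \<Rightarrow> real"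
  assumes d: "(\<phi> has_real_derivative c) (at x)" and "c \<noteq> 0"
  shows "eventually (\<lambda>h. \<phi> h \<noteq> 0) (at x)"
proof (cases "\<phi> x = 0")
  case True
  have "((\<lambda>y. (\<phi> y - \<phi> x) / (y - x)) \<longlongrightarrow> c) (at x)"
    using d has_field_derivative_iff by blast
  from tendsto_imp_eventually_ne[OF this \<open>c \<noteq> 0\<close>]
  show ?thesis
    by (rule eventually_mono) (use True in auto)
next
  case False
  have "(\<phi> \<longlongrightarrow> \<phi> x) (at x)"
    using DERIV_isCont[OF d] isCont_def by blast
  from tendsto_imp_eventually_ne[OF this False] show ?thesis .
qed

lemma DERIV_symmetric_quotient_tendsto:
  fixes \<psi> :: "real \<Rightarrow> real"
  assumes d: "(\<psi> has_real_derivative c) (at x)"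
    and h: "h \<longlonglongrightarrow> 0" and h_nz: "\<And>n. h n \<noteq> 0"
  shows "(\<lambda>n. (\<psi> (x + h n) - \<psi> (x - h n)) / (2 * h n)) \<longlonglongrightarrow> c"
proof -
  have q: "((\<lambda>k. (\<psi> (x + k) - \<psi> x) / k) \<longlongrightarrow> c) (at 0)"
    using d DERIV_def by blast
  have "filterlim h (at 0) sequentially" "filterlim (\<lambda>n. - h n) (at 0) sequentially"
    using h h_nz tendsto_minus[OF h] by (auto simp: filterlim_at)
  from this[THEN filterlim_compose[OF q]]
  have lim: "(\<lambda>n. ((\<psi> (x + h n) - \<psi> x) / h n + (\<psi> (x + - h n) - \<psi> x) / (- h n)) / 2)
      \<longlonglongrightarrow> (c + c) / 2"
    by (intro tendsto_intros) (simp_all add: comp_def)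
  have "(\<lambda>n. ((\<psi> (x + h n) - \<psi> x) / h n + (\<psi> (x + - h n) - \<psi> x) / (- h n)) / 2)
      = (\<lambda>n. (\<psi> (x + h n) - \<psi> (x - h n)) / (2 * h n))"
    using h_nz by (simp add: fun_eq_iff field_simps)
  with lim show ?thesis by simp
qed

section \<open>Differentiation under the integral sign\<close>

lemma norm_add_sq_le:
  fixes a b :: "'a::real_normed_vector"
  shows "(norm (a + b))\<^sup>2 \<le> 2 * (norm a)\<^sup>2 + 2 * (norm b)\<^sup>2"
proof -
  have "(norm (a + b))\<^sup>2 \<le> (norm a + norm b)\<^sup>2"
    by (intro power_mono norm_triangle_ineq) auto
  also have "\<dots> \<le> 2 * (norm a)\<^sup>2 + 2 * (norm b)\<^sup>2"
    using sum_squares_bound[of "norm a" "norm b"] by (simp add: power2_eq_square algebra_simps)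
  finally show ?thesis .
qed

lemma nn_integral_sq_norm_add_le:
  fixes u v :: "'a \<Rightarrow> 'b::euclidean_space"
  assumes [measurable]: "u \<in> borel_measurable M" "v \<in> borel_measurable M"
  shows "(\<integral>\<^sup>+x. ennreal ((norm (u x + v x))\<^sup>2) \<partial>M)
    \<le> 2 * (\<integral>\<^sup>+x. ennreal ((norm (u x))\<^sup>2) \<partial>M) + 2 * (\<integral>\<^sup>+x. ennreal ((norm (v x))\<^sup>2) \<partial>M)"
proof -
  have "(\<integral>\<^sup>+x. ennreal ((norm (u x + v x))\<^sup>2) \<partial>M)
      \<le> (\<integral>\<^sup>+x. 2 * ennreal ((norm (u x))\<^sup>2) + 2 * ennreal ((norm (v x))\<^sup>2) \<partial>M)"
    using norm_add_sq_le
    by (intro nn_integral_mono) (simp add: ennreal_leI flip: ennreal_plus ennreal_numeral ennreal_mult)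
  also have "\<dots> = 2 * (\<integral>\<^sup>+x. ennreal ((norm (u x))\<^sup>2) \<partial>M) + 2 * (\<integral>\<^sup>+x. ennreal ((norm (v x))\<^sup>2) \<partial>M)"
    by (simp add: nn_integral_add nn_integral_cmult)
  finally show ?thesis .
qed

lemma nn_integral_le_imp_integrable:
  fixes f :: "'a \<Rightarrow> real"
  assumes [measurable]: "f \<in> borel_measurable M" and nonneg: "\<And>x. 0 \<le> f x"
    and le: "(\<integral>\<^sup>+x. ennreal (f x) \<partial>M) \<le> ennreal C" and "0 \<le> C"
  shows "integrable M f" and "integral\<^sup>L M f \<le> C"
proof -
  show int: "integrable M f"
    using le nonneg by (intro integrableI_bounded) (auto simp: le_less_trans)
  have "ennreal (integral\<^sup>L M f) = (\<integral>\<^sup>+x. ennreal (f x) \<partial>M)"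
    using int nonneg by (intro nn_integral_eq_integral[symmetric]) auto
  with le have "ennreal (integral\<^sup>L M f) \<le> ennreal C"
    by simp
  with \<open>0 \<le> C\<close> show "integral\<^sup>L M f \<le> C"
    by (simp add: ennreal_le_iff)
qed

lemma sq_increment_le_nn_integral_sq_deriv:
  fixes \<psi> \<psi>' :: "real \<Rightarrow> real"
  assumes "a < b" and deriv: "\<And>s. (\<psi> has_real_derivative \<psi>' s) (at s)"
    and [measurable]: "\<psi>' \<in> borel_measurable borel"
  shows "ennreal ((\<psi> b - \<psi> a)\<^sup>2)
    \<le> ennreal (b - a) * (\<integral>\<^sup>+s. indicator {a..b} s * ennreal ((\<psi>' s)\<^sup>2) \<partial>lborel)"
proof -
  let ?g = "\<lambda>s. indicator {a..b} s * \<psi>' s"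
  let ?I = "\<integral>\<^sup>+s. indicator {a..b} s * ennreal ((\<psi>' s)\<^sup>2) \<partial>lborel"
  have "(\<integral>\<^sup>+s. ennreal \<bar>?g s\<bar> * indicator {a..b} s \<partial>lborel)\<^sup>2
      \<le> (\<integral>\<^sup>+s. (ennreal \<bar>?g s\<bar>)\<^sup>2 \<partial>lborel) * (\<integral>\<^sup>+s. (indicator {a..b} s)\<^sup>2 \<partial>lborel)"
    by (rule Cauchy_Schwarz_nn_integral) measurable
  also have "(\<lambda>s. (ennreal \<bar>?g s\<bar>)\<^sup>2) = (\<lambda>s. indicator {a..b} s * ennreal ((\<psi>' s)\<^sup>2))"
    by (auto simp: fun_eq_iff indicator_def ennreal_power)
  also have "(\<lambda>s. (indicator {a..b} s :: ennreal)\<^sup>2) = indicator {a..b}"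
    by (auto simp: fun_eq_iff indicator_def)
  also have "(\<lambda>s. ennreal \<bar>?g s\<bar> * indicator {a..b} s) = (\<lambda>s. ennreal \<bar>?g s\<bar>)"
    by (auto simp: fun_eq_iff indicator_def)
  finally have CS: "(\<integral>\<^sup>+s. ennreal \<bar>?g s\<bar> \<partial>lborel)\<^sup>2 \<le> ennreal (b - a) * ?I"
    using \<open>a < b\<close> by (simp add: mult.commute)
  show ?thesis
  proof (cases "?I = \<infinity>")
    case True
    with \<open>a < b\<close> show ?thesis by (simp add: ennreal_mult_top)
  next
    case False
    with \<open>a < b\<close> have "ennreal (b - a) * ?I < \<infinity>"
      by (simp add: ennreal_mult_less_top less_top)
    with CS have "(\<integral>\<^sup>+s. ennreal \<bar>?g s\<bar> \<partial>lborel)\<^sup>2 < \<infinity>"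
      by (rule le_less_trans)
    then have int: "integrable lborel ?g"
      by (intro integrableI_bounded) (auto simp: power_less_top_ennreal)
    have "(\<psi>' has_integral (\<psi> b - \<psi> a)) {a..b}"
      using \<open>a < b\<close> deriv
      by (intro fundamental_theorem_of_calculus)
        (auto simp: has_real_derivative_iff_has_vector_derivative[symmetric] intro: has_field_derivative_at_within)
    moreover have "(LINT s:{a..b}|lborel. \<psi>' s) = integral {a..b} \<psi>'"
      using int by (intro set_borel_integral_eq_integral(2)) (simp add: set_integrable_def)
    ultimately have "integral\<^sup>L lborel ?g = \<psi> b - \<psi> a"
      by (simp add: set_lebesgue_integral_def integral_unique)
    with integral_norm_bound_ennreal[OF int]
    have "ennreal \<bar>\<psi> b - \<psi> a\<bar> \<le> (\<integral>\<^sup>+s. ennreal \<bar>?g s\<bar> \<partial>lborel)" by simp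
    then have "(ennreal \<bar>\<psi> b - \<psi> a\<bar>)\<^sup>2 \<le> (\<integral>\<^sup>+s. ennreal \<bar>?g s\<bar> \<partial>lborel)\<^sup>2"
      by (rule power_mono) simp
    with CS show ?thesis
      by (simp add: ennreal_power)
  qed
qed

lemma sq_difference_quotient_le_nn_integral_sq_deriv:
  fixes \<psi> \<psi>' :: "real \<Rightarrow> real"
  assumes "a < b" and deriv: "\<And>s. (\<psi> has_real_derivative \<psi>' s) (at s)"
    and [measurable]: "\<psi>' \<in> borel_measurable borel"
  shows "ennreal (((\<psi> b - \<psi> a) / (b - a))\<^sup>2)
    \<le> (\<integral>\<^sup>+s. ennreal (1 / (b - a)) * (indicator {a..b} s * ennreal ((\<psi>' s)\<^sup>2)) \<partial>lborel)"
proof -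
  let ?I = "\<integral>\<^sup>+s. indicator {a..b} s * ennreal ((\<psi>' s)\<^sup>2) \<partial>lborel"
  have "ennreal (((\<psi> b - \<psi> a) / (b - a))\<^sup>2) = ennreal (1 / (b - a)\<^sup>2) * ennreal ((\<psi> b - \<psi> a)\<^sup>2)"
    by (simp add: power_divide flip: ennreal_mult)
  also have "\<dots> \<le> ennreal (1 / (b - a)\<^sup>2) * (ennreal (b - a) * ?I)"
    using assms by (intro mult_left_mono sq_increment_le_nn_integral_sq_deriv) auto
  also have "\<dots> = ennreal (1 / (b - a)) * ?I"
  proof -
    have "ennreal (1 / (b - a)\<^sup>2) * ennreal (b - a) = ennreal (1 / (b - a))"
      using \<open>a < b\<close> by (simp add: power2_eq_square flip: ennreal_mult)
    then show ?thesis
      by (simp only: mult.assoc[symmetric])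
  qed
  also have "\<dots> = (\<integral>\<^sup>+s. ennreal (1 / (b - a)) * (indicator {a..b} s * ennreal ((\<psi>' s)\<^sup>2)) \<partial>lborel)"
    by (rule nn_integral_cmult[symmetric]) measurable
  finally show ?thesis .
qed

lemma nn_integral_sq_difference_quotient_le:
  fixes \<psi> \<psi>' :: "real \<Rightarrow> 'a \<Rightarrow> real"
  assumes M: "sigma_finite_measure M" and "0 < h"
    and deriv: "\<And>s \<xi>. ((\<lambda>s. \<psi> s \<xi>) has_real_derivative \<psi>' s \<xi>) (at s)"
    and meas [measurable]: "(\<lambda>p. \<psi>' (fst p) (snd p)) \<in> borel_measurable (lborel \<Otimes>\<^sub>M M)"
    and bound: "\<And>s. \<bar>s\<bar> \<le> h \<Longrightarrow> (\<integral>\<^sup>+\<xi>. ennreal ((\<psi>' s \<xi>)\<^sup>2) \<partial>M) \<le> B"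
  shows "(\<integral>\<^sup>+\<xi>. ennreal (((\<psi> h \<xi> - \<psi> (- h) \<xi>) / (2 * h))\<^sup>2) \<partial>M) \<le> B"
proof -
  interpret pair_sigma_finite lborel M
    using M by (simp add: pair_sigma_finite_def lborel.sigma_finite_measure_axioms)
  let ?c = "ennreal (1 / (2 * h))"
  let ?H = "\<lambda>s \<xi>. ?c * (indicator {-h..h} s * ennreal ((\<psi>' s \<xi>)\<^sup>2))"
  have quotient_le: "ennreal (((\<psi> h \<xi> - \<psi> (- h) \<xi>) / (2 * h))\<^sup>2) \<le> (\<integral>\<^sup>+s. ?H s \<xi> \<partial>lborel)"
    if "\<xi> \<in> space M" for \<xi>
  proof -
    have "(\<lambda>s. (s, \<xi>)) \<in> measurable borel (lborel \<Otimes>\<^sub>M M)"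
      using that by measurable
    from measurable_compose[OF this meas]
    have "(\<lambda>s. \<psi>' s \<xi>) \<in> borel_measurable borel"
      by simp
    with \<open>0 < h\<close> have "ennreal (((\<psi> h \<xi> - \<psi> (- h) \<xi>) / (h - - h))\<^sup>2)
        \<le> (\<integral>\<^sup>+s. ennreal (1 / (h - - h)) * (indicator {- h..h} s * ennreal ((\<psi>' s \<xi>)\<^sup>2)) \<partial>lborel)"
      by (intro sq_difference_quotient_le_nn_integral_sq_deriv deriv) auto
    then show ?thesis
      by (simp only: diff_minus_eq_add mult_2)
  qed
  have "(\<integral>\<^sup>+\<xi>. ennreal (((\<psi> h \<xi> - \<psi> (- h) \<xi>) / (2 * h))\<^sup>2) \<partial>M) \<le> (\<integral>\<^sup>+\<xi>. \<integral>\<^sup>+s. ?H s \<xi> \<partial>lborel \<partial>M)"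
    using quotient_le by (intro nn_integral_mono) auto
  also have "\<dots> = (\<integral>\<^sup>+s. \<integral>\<^sup>+\<xi>. ?H s \<xi> \<partial>M \<partial>lborel)"
    by (intro Fubini') measurable
  also have "\<dots> \<le> (\<integral>\<^sup>+s. ?c * (indicator {-h..h} s * B) \<partial>lborel)"
  proof (intro nn_integral_mono)
    fix s
    show "(\<integral>\<^sup>+\<xi>. ?H s \<xi> \<partial>M) \<le> ?c * (indicator {-h..h} s * B)"
      using bound[of s] measurable_compose[OF measurable_Pair1'[of s lborel M] meas]
      by (cases "s \<in> {-h..h}") (auto simp: nn_integral_cmult intro: mult_left_mono)
  qed
  also have "\<dots> = ?c * B * ennreal (h - - h)"
    using \<open>0 < h\<close> by (simp add: nn_integral_cmult nn_integral_multc ac_simps)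
  also have "\<dots> = B"
    using \<open>0 < h\<close> by (simp add: mult.commute[of _ B] mult.assoc field_simps flip: ennreal_mult)
  finally show ?thesis .
qed

lemma (in prob_space) expectation_abs_le_truncation:
  fixes r :: "'a \<Rightarrow> real"
  assumes "integrable M r" "integrable M (\<lambda>\<omega>. (r \<omega>)\<^sup>2)" "0 < K"
  shows "expectation (\<lambda>\<omega>. \<bar>r \<omega>\<bar>) \<le> expectation (\<lambda>\<omega>. min \<bar>r \<omega>\<bar> K) + expectation (\<lambda>\<omega>. (r \<omega>)\<^sup>2) / K"
proof -
  have "\<bar>y\<bar> \<le> min \<bar>y\<bar> K + y\<^sup>2 / K" for y :: real
  proof (cases "\<bar>y\<bar> \<le> K")
    case False
    then have "\<bar>y\<bar> * K \<le> \<bar>y\<bar> * \<bar>y\<bar>"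
      by (intro mult_left_mono) auto
    then have "\<bar>y\<bar> \<le> y\<^sup>2 / K"
      using \<open>0 < K\<close> by (simp add: pos_le_divide_eq power2_eq_square)
    with \<open>0 < K\<close> show ?thesis by simp
  qed (use \<open>0 < K\<close> in simp)
  moreover have min_int: "integrable M (\<lambda>\<omega>. min \<bar>r \<omega>\<bar> K)"
    using assms by (intro integrable_const_bound[where B=K]) auto
  ultimately have "expectation (\<lambda>\<omega>. \<bar>r \<omega>\<bar>) \<le> expectation (\<lambda>\<omega>. min \<bar>r \<omega>\<bar> K + (r \<omega>)\<^sup>2 / K)"
    using assms by (intro integral_mono) auto
  also have "\<dots> = expectation (\<lambda>\<omega>. min \<bar>r \<omega>\<bar> K) + expectation (\<lambda>\<omega>. (r \<omega>)\<^sup>2) / K"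
    using assms min_int by simp
  finally show ?thesis .
qed

lemma (in prob_space) tendsto_expectation_abs_of_L2_bounded:
  fixes r :: "nat \<Rightarrow> 'a \<Rightarrow> real"
  assumes r_int: "\<And>n. integrable M (r n)" and lim: "\<And>\<omega>. \<omega> \<in> space M \<Longrightarrow> (\<lambda>n. r n \<omega>) \<longlonglongrightarrow> 0"
    and bound: "\<And>n. (\<integral>\<^sup>+\<omega>. ennreal ((r n \<omega>)\<^sup>2) \<partial>M) \<le> ennreal C" and "0 \<le> C"
  shows "(\<lambda>n. expectation (\<lambda>\<omega>. \<bar>r n \<omega>\<bar>)) \<longlonglongrightarrow> 0"
proof (rule LIMSEQ_I)
  fix \<epsilon> :: real
  assume "0 < \<epsilon>"
  have [measurable]: "r n \<in> borel_measurable M" for n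
    using r_int by auto
  have "(\<lambda>\<omega>. (r n \<omega>)\<^sup>2) \<in> borel_measurable M" for n
    by measurable
  then have sq_int: "integrable M (\<lambda>\<omega>. (r n \<omega>)\<^sup>2)" and sq_le: "expectation (\<lambda>\<omega>. (r n \<omega>)\<^sup>2) \<le> C" for n
    using nn_integral_le_imp_integrable[OF _ _ bound[of n] \<open>0 \<le> C\<close>] by auto
  define K where "K = 2 * C / \<epsilon> + 1"
  have "0 < K"
    using \<open>0 \<le> C\<close> \<open>0 < \<epsilon>\<close> by (simp add: K_def add_nonneg_pos)
  have "\<epsilon> / 2 * K = C + \<epsilon> / 2"
    using \<open>0 < \<epsilon>\<close> by (simp add: K_def field_simps)
  then have "C / K < \<epsilon> / 2"
    using \<open>0 < K\<close> \<open>0 < \<epsilon>\<close> by (simp add: pos_divide_less_eq)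
  have "(\<lambda>n. expectation (\<lambda>\<omega>. min \<bar>r n \<omega>\<bar> K)) \<longlonglongrightarrow> expectation (\<lambda>_. 0)"
  proof (rule integral_dominated_convergence[where w="\<lambda>_. K"])
    show "AE \<omega> in M. (\<lambda>n. min \<bar>r n \<omega>\<bar> K) \<longlonglongrightarrow> 0"
      using tendsto_min[OF tendsto_rabs_zero[OF lim] tendsto_const[of K]] \<open>0 < K\<close> by simp
  qed (use \<open>0 < K\<close> in auto)
  then have "(\<lambda>n. expectation (\<lambda>\<omega>. min \<bar>r n \<omega>\<bar> K)) \<longlonglongrightarrow> 0"
    by simp
  from LIMSEQ_D[OF this, of "\<epsilon> / 2"] \<open>0 < \<epsilon>\<close> obtain N
    where N: "\<And>n. n \<ge> N \<Longrightarrow> \<bar>expectation (\<lambda>\<omega>. min \<bar>r n \<omega>\<bar> K)\<bar> < \<epsilon> / 2"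
    by auto
  show "\<exists>N. \<forall>n\<ge>N. norm (expectation (\<lambda>\<omega>. \<bar>r n \<omega>\<bar>) - 0) < \<epsilon>"
  proof (intro exI allI impI)
    fix n
    assume "N \<le> n"
    have "expectation (\<lambda>\<omega>. (r n \<omega>)\<^sup>2) / K \<le> C / K"
      using sq_le \<open>0 < K\<close> by (intro divide_right_mono) auto
    then have "expectation (\<lambda>\<omega>. \<bar>r n \<omega>\<bar>) < \<epsilon>"
      using expectation_abs_le_truncation[OF r_int[of n] sq_int[of n] \<open>0 < K\<close>] N[OF \<open>N \<le> n\<close>]
        \<open>C / K < \<epsilon> / 2\<close>
      by linarith
    then show "norm (expectation (\<lambda>\<omega>. \<bar>r n \<omega>\<bar>) - 0) < \<epsilon>"
      by simp
  qed
qed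

lemma (in prob_space) integral_tendsto_of_L2_bounded:
  fixes X :: "nat \<Rightarrow> 'a \<Rightarrow> real"
  assumes X: "\<And>n. integrable M (X n)" and Y: "integrable M Y"
    and lim: "\<And>\<omega>. \<omega> \<in> space M \<Longrightarrow> (\<lambda>n. X n \<omega>) \<longlonglongrightarrow> Y \<omega>"
    and bound: "\<And>n. (\<integral>\<^sup>+\<omega>. ennreal ((X n \<omega> - Y \<omega>)\<^sup>2) \<partial>M) \<le> ennreal C" and "0 \<le> C"
  shows "(\<lambda>n. expectation (X n)) \<longlonglongrightarrow> expectation Y"
proof -
  have "(\<lambda>n. expectation (\<lambda>\<omega>. \<bar>X n \<omega> - Y \<omega>\<bar>)) \<longlonglongrightarrow> 0"
    using X Y lim bound \<open>0 \<le> C\<close>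
    by (intro tendsto_expectation_abs_of_L2_bounded) (auto simp: LIM_zero)
  then have "(\<lambda>n. expectation (\<lambda>\<omega>. X n \<omega> - Y \<omega>)) \<longlonglongrightarrow> 0"
    by (rule Lim_null_comparison[rotated]) (simp add: integral_abs_bound)
  then show ?thesis
    using X Y by (simp add: LIM_zero_iff)
qed

lemma nn_integral_sq_inner_le:
  fixes a :: "'b \<Rightarrow> 'a::euclidean_space"
  assumes "prob_space M" and [measurable]: "a \<in> borel_measurable M"
    and var: "(\<integral>\<^sup>+\<xi>. ennreal ((norm (a \<xi> - v))\<^sup>2) \<partial>M) \<le> ennreal (\<sigma>\<^sup>2)"
  shows "(\<integral>\<^sup>+\<xi>. ennreal ((a \<xi> \<bullet> e)\<^sup>2) \<partial>M) \<le> ennreal ((norm e)\<^sup>2 * (2 * \<sigma>\<^sup>2 + 2 * (norm v)\<^sup>2))"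
proof -
  interpret prob_space M by fact
  have "(a \<xi> \<bullet> e)\<^sup>2 \<le> (norm e)\<^sup>2 * (norm (a \<xi>))\<^sup>2" for \<xi>
    using power_mono[OF Cauchy_Schwarz_ineq2[of "a \<xi>" e] abs_ge_zero, of 2]
    by (simp add: power_mult_distrib mult.commute)
  then have "(\<integral>\<^sup>+\<xi>. ennreal ((a \<xi> \<bullet> e)\<^sup>2) \<partial>M) \<le> (\<integral>\<^sup>+\<xi>. ennreal ((norm e)\<^sup>2) * ennreal ((norm (a \<xi>))\<^sup>2) \<partial>M)"
    by (intro nn_integral_mono) (simp add: ennreal_leI flip: ennreal_mult)
  also have "\<dots> = ennreal ((norm e)\<^sup>2) * (\<integral>\<^sup>+\<xi>. ennreal ((norm ((a \<xi> - v) + v))\<^sup>2) \<partial>M)"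
    by (simp add: nn_integral_cmult)
  also have "\<dots> \<le> ennreal ((norm e)\<^sup>2)
      * (2 * (\<integral>\<^sup>+\<xi>. ennreal ((norm (a \<xi> - v))\<^sup>2) \<partial>M) + 2 * (\<integral>\<^sup>+\<xi>. ennreal ((norm v)\<^sup>2) \<partial>M))"
    by (intro mult_left_mono nn_integral_sq_norm_add_le) auto
  also have "\<dots> \<le> ennreal ((norm e)\<^sup>2) * (2 * ennreal (\<sigma>\<^sup>2) + 2 * ennreal ((norm v)\<^sup>2))"
    using var by (intro mult_left_mono add_mono) (auto simp: emeasure_space_1)
  also have "\<dots> = ennreal ((norm e)\<^sup>2 * (2 * \<sigma>\<^sup>2 + 2 * (norm v)\<^sup>2))"
    by (simp flip: ennreal_mult ennreal_plus ennreal_numeral)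
  finally show ?thesis .
qed

lemma nn_integral_sq_difference_quotient_sub_deriv_le:
  fixes \<psi> \<psi>' :: "real \<Rightarrow> 'a \<Rightarrow> real"
  assumes M: "sigma_finite_measure M" and "0 < h"
    and deriv: "\<And>s \<xi>. ((\<lambda>s. \<psi> s \<xi>) has_real_derivative \<psi>' s \<xi>) (at s)"
    and meas [measurable]: "(\<lambda>p. \<psi>' (fst p) (snd p)) \<in> borel_measurable (lborel \<Otimes>\<^sub>M M)"
    and [measurable]: "\<psi> h \<in> borel_measurable M" "\<psi> (- h) \<in> borel_measurable M"
    and bound: "\<And>s. \<bar>s\<bar> \<le> h \<Longrightarrow> (\<integral>\<^sup>+\<xi>. ennreal ((\<psi>' s \<xi>)\<^sup>2) \<partial>M) \<le> ennreal B" and "0 \<le> B"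
  shows "(\<integral>\<^sup>+\<xi>. ennreal (((\<psi> h \<xi> - \<psi> (- h) \<xi>) / (2 * h) - \<psi>' 0 \<xi>)\<^sup>2) \<partial>M) \<le> ennreal (4 * B)"
proof -
  let ?Q = "\<lambda>\<xi>. (\<psi> h \<xi> - \<psi> (- h) \<xi>) / (2 * h)"
  have [measurable]: "\<psi>' 0 \<in> borel_measurable M"
    using measurable_compose[OF measurable_Pair1'[of 0 lborel M] meas] by simp
  have "(\<integral>\<^sup>+\<xi>. ennreal ((?Q \<xi> - \<psi>' 0 \<xi>)\<^sup>2) \<partial>M) = (\<integral>\<^sup>+\<xi>. ennreal ((norm (?Q \<xi> + - \<psi>' 0 \<xi>))\<^sup>2) \<partial>M)"
    by simp
  also have "\<dots> \<le> 2 * (\<integral>\<^sup>+\<xi>. ennreal ((?Q \<xi>)\<^sup>2) \<partial>M) + 2 * (\<integral>\<^sup>+\<xi>. ennreal ((\<psi>' 0 \<xi>)\<^sup>2) \<partial>M)"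
    using nn_integral_sq_norm_add_le[of ?Q M "\<lambda>\<xi>. - \<psi>' 0 \<xi>"] by (simp add: power_divide)
  also have "\<dots> \<le> 2 * ennreal B + 2 * ennreal B"
    using nn_integral_sq_difference_quotient_le[OF M \<open>0 < h\<close> deriv meas bound] bound[of 0] \<open>0 < h\<close>
    by (intro add_mono mult_left_mono) auto
  also have "\<dots> = ennreal (4 * B)"
    using \<open>0 \<le> B\<close> by (simp flip: ennreal_plus ennreal_numeral ennreal_mult)
  finally show ?thesis .
qed

lemma (in prob_space) integral_deriv_eq_deriv_integral:
  fixes \<psi> \<psi>' :: "real \<Rightarrow> 'a \<Rightarrow> real"
  assumes deriv: "\<And>s \<xi>. ((\<lambda>s. \<psi> s \<xi>) has_real_derivative \<psi>' s \<xi>) (at s)"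
    and meas [measurable]: "(\<lambda>p. \<psi>' (fst p) (snd p)) \<in> borel_measurable (lborel \<Otimes>\<^sub>M M)"
    and int: "\<forall>\<^sub>F s in at 0. integrable M (\<psi> s)"
    and bound: "\<forall>\<^sub>F s in nhds 0. (\<integral>\<^sup>+\<xi>. ennreal ((\<psi>' s \<xi>)\<^sup>2) \<partial>M) \<le> ennreal B" and "0 \<le> B"
    and mean_deriv: "((\<lambda>s. expectation (\<psi> s)) has_real_derivative c) (at 0)"
  shows "integrable M (\<psi>' 0)" and "expectation (\<psi>' 0) = c"
proof -
  obtain d1 where "0 < d1" and int_d1: "\<And>s. s \<noteq> 0 \<Longrightarrow> \<bar>s\<bar> < d1 \<Longrightarrow> integrable M (\<psi> s)"
    using int unfolding eventually_at by (auto simp: dist_real_def)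
  obtain d2 where "0 < d2"
    and bound_d2: "\<And>s. \<bar>s\<bar> < d2 \<Longrightarrow> (\<integral>\<^sup>+\<xi>. ennreal ((\<psi>' s \<xi>)\<^sup>2) \<partial>M) \<le> ennreal B"
    using bound unfolding eventually_nhds_metric by (auto simp: dist_real_def)
  define h where "h n = min d1 d2 / 2 * inverse (real (Suc n))" for n
  have h_pos: "0 < h n" for n
    using \<open>0 < d1\<close> \<open>0 < d2\<close> by (simp add: h_def)
  have h_le: "h n \<le> min d1 d2 / 2" for n
    unfolding h_def using \<open>0 < d1\<close> \<open>0 < d2\<close> by (intro mult_left_le) (auto simp: inverse_le_1_iff)
  have h_lt: "h n < d1 \<and> h n < d2" for n
    using h_le[of n] min.cobounded1[of d1 d2] min.cobounded2[of d1 d2] \<open>0 < d1\<close> \<open>0 < d2\<close> by linarith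
  have h_lim: "h \<longlonglongrightarrow> 0"
    unfolding h_def by (intro tendsto_mult_right_zero LIMSEQ_inverse_real_of_nat)
  have h_nz: "h n \<noteq> 0" for n
    using h_pos[of n] by simp
  define Q where "Q n \<xi> = (\<psi> (h n) \<xi> - \<psi> (- h n) \<xi>) / (2 * h n)" for n \<xi>
  have int_h: "integrable M (\<psi> (h n))" "integrable M (\<psi> (- h n))" for n
    using int_d1[of "h n"] int_d1[of "- h n"] h_pos[of n] h_lt[of n] by auto
  have [measurable]: "\<psi>' 0 \<in> borel_measurable M"
    using measurable_compose[OF measurable_Pair1'[of 0 lborel M] meas] by simp
  have "integrable M (\<lambda>\<xi>. (\<psi>' 0 \<xi>)\<^sup>2)"
    using bound_d2[of 0] \<open>0 < d2\<close> \<open>0 \<le> B\<close> by (intro nn_integral_le_imp_integrable) auto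
  then show A_int: "integrable M (\<psi>' 0)"
    by (rule square_integrable_imp_integrable[rotated]) measurable
  have "(\<lambda>n. (expectation (\<psi> (0 + h n)) - expectation (\<psi> (0 - h n))) / (2 * h n)) \<longlonglongrightarrow> c"
    by (rule DERIV_symmetric_quotient_tendsto[OF mean_deriv h_lim h_nz])
  then have Q_mean: "(\<lambda>n. expectation (Q n)) \<longlonglongrightarrow> c"
    unfolding Q_def using int_h by simp
  have Q_lim: "(\<lambda>n. Q n \<xi>) \<longlonglongrightarrow> \<psi>' 0 \<xi>" for \<xi>
    using DERIV_symmetric_quotient_tendsto[OF deriv[of \<xi> 0] h_lim h_nz] by (simp add: Q_def)
  have Q_dev: "(\<integral>\<^sup>+\<xi>. ennreal ((Q n \<xi> - \<psi>' 0 \<xi>)\<^sup>2) \<partial>M) \<le> ennreal (4 * B)" for n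
    unfolding Q_def using int_h[of n] h_lt[of n] h_pos[of n]
    by (intro nn_integral_sq_difference_quotient_sub_deriv_le[OF prob_space_imp_sigma_finite[OF prob_space_axioms]]
        deriv meas bound_d2 \<open>0 \<le> B\<close>) auto
  have "(\<lambda>n. expectation (Q n)) \<longlonglongrightarrow> expectation (\<psi>' 0)"
    using int_h A_int Q_lim Q_dev \<open>0 \<le> B\<close> unfolding Q_def
    by (intro integral_tendsto_of_L2_bounded[where C="4 * B"]) auto
  with Q_mean show "expectation (\<psi>' 0) = c"
    by (rule LIMSEQ_unique[rotated])
qed

lemma nn_integral_sq_sgrad_inner_along_line_le:
  fixes G :: "'a::euclidean_space \<Rightarrow> 'b \<Rightarrow> real"
  assumes M: "prob_space M"
    and G_meas: "(\<lambda>p. sgrad G (fst p) (snd p)) \<in> borel_measurable (borel \<Otimes>\<^sub>M M)"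
    and f_smooth: "L_smooth f L"
    and var: "\<And>x. (\<integral>\<^sup>+\<xi>. ennreal ((norm (sgrad G x \<xi> - grad f x))\<^sup>2) \<partial>M) \<le> ennreal (\<sigma>\<^sup>2)"
    and "\<bar>s\<bar> \<le> 1"
  shows "(\<integral>\<^sup>+\<xi>. ennreal ((sgrad G (x + s *\<^sub>R e) \<xi> \<bullet> e)\<^sup>2) \<partial>M)
    \<le> ennreal ((norm e)\<^sup>2 * (2 * \<sigma>\<^sup>2 + 2 * (norm (grad f x) + \<bar>L\<bar> * norm e)\<^sup>2))"
proof -
  have [measurable]: "sgrad G y \<in> borel_measurable M" for y
    using measurable_compose[OF measurable_Pair1'[of y borel M] G_meas] by simp
  have "norm (grad f (x + s *\<^sub>R e) - grad f x) \<le> L * norm ((x + s *\<^sub>R e) - x)"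
    using f_smooth unfolding L_smooth_def by blast
  also have "\<dots> = L * (\<bar>s\<bar> * norm e)"
    by simp
  also have "\<dots> \<le> \<bar>L\<bar> * (\<bar>s\<bar> * norm e)"
    by (intro mult_right_mono abs_ge_self) simp
  also have "\<dots> \<le> \<bar>L\<bar> * norm e"
    using \<open>\<bar>s\<bar> \<le> 1\<close> by (intro mult_left_mono mult_left_le_one_le) auto
  finally have "norm (grad f (x + s *\<^sub>R e)) \<le> norm (grad f x) + \<bar>L\<bar> * norm e"
    using norm_triangle_ineq[of "grad f (x + s *\<^sub>R e) - grad f x" "grad f x"] by simp
  then have "(norm (grad f (x + s *\<^sub>R e)))\<^sup>2 \<le> (norm (grad f x) + \<bar>L\<bar> * norm e)\<^sup>2"
    by (rule power_mono) simp
  then have "ennreal ((norm e)\<^sup>2 * (2 * \<sigma>\<^sup>2 + 2 * (norm (grad f (x + s *\<^sub>R e)))\<^sup>2))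
      \<le> ennreal ((norm e)\<^sup>2 * (2 * \<sigma>\<^sup>2 + 2 * (norm (grad f x) + \<bar>L\<bar> * norm e)\<^sup>2))"
    by (intro ennreal_leI mult_left_mono) auto
  with nn_integral_sq_inner_le[OF M _ var, of "x + s *\<^sub>R e" e] show ?thesis
    by (auto intro: order_trans)
qed

lemma integral_sgrad_inner_grad:
  fixes G :: "'a::euclidean_space \<Rightarrow> 'b \<Rightarrow> real"
  assumes M: "prob_space M"
    and G_diff: "\<And>x \<xi>. (\<lambda>y. G y \<xi>) differentiable (at x)"
    and G_meas: "(\<lambda>p. sgrad G (fst p) (snd p)) \<in> borel_measurable (borel \<Otimes>\<^sub>M M)"
    and f_def: "\<And>x. f x = (\<integral>\<xi>. G x \<xi> \<partial>M)"
    and f_smooth: "L_smooth f L"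
    and var: "\<And>x. (\<integral>\<^sup>+\<xi>. ennreal ((norm (sgrad G x \<xi> - grad f x))\<^sup>2) \<partial>M) \<le> ennreal (\<sigma>\<^sup>2)"
  shows "integrable M (\<lambda>\<xi>. sgrad G x \<xi> \<bullet> grad f x)"
    and "(\<integral>\<xi>. sgrad G x \<xi> \<bullet> grad f x \<partial>M) = (norm (grad f x))\<^sup>2"
proof -
  interpret prob_space M by fact
  define g where "g = grad f x"
  have mean_deriv: "((\<lambda>s. expectation (G (x + s *\<^sub>R g))) has_real_derivative (norm g)\<^sup>2) (at 0)"
    using has_real_derivative_along_line[of f x 0 g] f_smooth
    by (simp add: f_def[abs_def] g_def power2_norm_eq_inner L_smooth_def)
  have "integrable M (\<lambda>\<xi>. sgrad G x \<xi> \<bullet> g) \<and> expectation (\<lambda>\<xi>. sgrad G x \<xi> \<bullet> g) = (norm g)\<^sup>2"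
  proof (cases "g = 0")
    case False
    have deriv: "((\<lambda>s. G (x + s *\<^sub>R g) \<xi>) has_real_derivative sgrad G (x + s *\<^sub>R g) \<xi> \<bullet> g) (at s)"
      for s \<xi>
      unfolding sgrad_def by (rule has_real_derivative_along_line) (rule G_diff)
    have "(\<lambda>p. (x + fst p *\<^sub>R g, snd p)) \<in> measurable (lborel \<Otimes>\<^sub>M M) (borel \<Otimes>\<^sub>M M)"
      by measurable
    from measurable_compose[OF this G_meas]
    have [measurable]: "(\<lambda>p. sgrad G (x + fst p *\<^sub>R g) (snd p)) \<in> borel_measurable (lborel \<Otimes>\<^sub>M M)"
      by simp
    have meas: "(\<lambda>p. sgrad G (x + fst p *\<^sub>R g) (snd p) \<bullet> g) \<in> borel_measurable (lborel \<Otimes>\<^sub>M M)"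
      by measurable
    \<comment> \<open>\<open>G (x + s *\<^sub>R g)\<close> is integrable for small \<open>s \<noteq> 0\<close>: otherwise its mean would be the junk
      value \<open>0\<close>, but the means have the nonzero derivative \<open>(norm g)\<^sup>2\<close> at \<open>0\<close>.\<close>
    have int: "\<forall>\<^sub>F s in at 0. integrable M (G (x + s *\<^sub>R g))"
      using DERIV_eventually_nonzero[OF mean_deriv] False
      by (auto elim!: eventually_mono intro: ccontr dest: not_integrable_integral_eq)
    have "\<forall>\<^sub>F s in nhds 0. (\<integral>\<^sup>+\<xi>. ennreal ((sgrad G (x + s *\<^sub>R g) \<xi> \<bullet> g)\<^sup>2) \<partial>M)
        \<le> ennreal ((norm g)\<^sup>2 * (2 * \<sigma>\<^sup>2 + 2 * (norm g + \<bar>L\<bar> * norm g)\<^sup>2))"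
      unfolding eventually_nhds_metric g_def
      by (intro exI[of _ 1] conjI allI impI nn_integral_sq_sgrad_inner_along_line_le[OF M G_meas f_smooth var])
        auto
    from integral_deriv_eq_deriv_integral[OF deriv meas int this _ mean_deriv]
    show ?thesis
      by simp
  qed simp
  then show "integrable M (\<lambda>\<xi>. sgrad G x \<xi> \<bullet> grad f x)"
    and "(\<integral>\<xi>. sgrad G x \<xi> \<bullet> grad f x \<partial>M) = (norm (grad f x))\<^sup>2"
    by (simp_all add: g_def)
qed

lemma nn_integral_sq_sgrad_le:
  fixes G :: "'a::euclidean_space \<Rightarrow> 'b \<Rightarrow> real"
  assumes M: "prob_space M"
    and G_diff: "\<And>x \<xi>. (\<lambda>y. G y \<xi>) differentiable (at x)"
    and G_meas: "(\<lambda>p. sgrad G (fst p) (snd p)) \<in> borel_measurable (borel \<Otimes>\<^sub>M M)"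
    and f_def: "\<And>x. f x = (\<integral>\<xi>. G x \<xi> \<partial>M)"
    and f_smooth: "L_smooth f L"
    and var: "\<And>x. (\<integral>\<^sup>+\<xi>. ennreal ((norm (sgrad G x \<xi> - grad f x))\<^sup>2) \<partial>M) \<le> ennreal (\<sigma>\<^sup>2)"
  shows "(\<integral>\<^sup>+\<xi>. ennreal ((norm (sgrad G x \<xi>))\<^sup>2) \<partial>M) \<le> ennreal (\<sigma>\<^sup>2 + (norm (grad f x))\<^sup>2)"
proof -
  interpret prob_space M by fact
  let ?s = "sgrad G x" and ?g = "grad f x"
  have [measurable]: "?s \<in> borel_measurable M"
    using measurable_compose[OF measurable_Pair1'[of x borel M] G_meas] by simp
  have "(\<lambda>\<xi>. (norm (?s \<xi> - ?g))\<^sup>2) \<in> borel_measurable M"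
    by measurable
  from nn_integral_le_imp_integrable[OF this _ var[of x]]
  have var_int: "integrable M (\<lambda>\<xi>. (norm (?s \<xi> - ?g))\<^sup>2)"
    and var_le: "expectation (\<lambda>\<xi>. (norm (?s \<xi> - ?g))\<^sup>2) \<le> \<sigma>\<^sup>2"
    by auto
  note mean = integral_sgrad_inner_grad[OF assms]
  have expand: "(norm (?s \<xi>))\<^sup>2 = (norm (?s \<xi> - ?g))\<^sup>2 + 2 * (?s \<xi> \<bullet> ?g) - (norm ?g)\<^sup>2" for \<xi>
    by (simp add: power2_norm_eq_inner inner_diff_left inner_diff_right inner_commute)
  have "integrable M (\<lambda>\<xi>. (norm (?s \<xi>))\<^sup>2)"
    unfolding expand using var_int mean(1) by simp
  then have "(\<integral>\<^sup>+\<xi>. ennreal ((norm (?s \<xi>))\<^sup>2) \<partial>M) = ennreal (expectation (\<lambda>\<xi>. (norm (?s \<xi>))\<^sup>2))"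
    by (intro nn_integral_eq_integral) auto
  also have "expectation (\<lambda>\<xi>. (norm (?s \<xi>))\<^sup>2) = expectation (\<lambda>\<xi>. (norm (?s \<xi> - ?g))\<^sup>2) + (norm ?g)\<^sup>2"
    unfolding expand using var_int mean by (simp add: prob_space)
  finally show ?thesis
    using var_le by (simp add: ennreal_leI)
qed

section \<open>Product measures and nonnegative integrals\<close>

lemma nn_integral_PiM_independent_coordinate:
  fixes M :: "'i \<Rightarrow> 'a measure" and X :: "('i \<Rightarrow> 'a) \<Rightarrow> 'b"
  assumes M: "\<And>i. prob_space (M i)"
    and X [measurable]: "X \<in> measurable (PiM UNIV M) N"
    and X_indep: "\<And>\<omega> y. X (fun_upd \<omega> p y) = X \<omega>"
    and h [measurable]: "case_prod h \<in> borel_measurable (N \<Otimes>\<^sub>M M p)"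
  shows "(\<integral>\<^sup>+\<omega>. h (X \<omega>) (\<omega> p) \<partial>PiM UNIV M) = (\<integral>\<^sup>+\<omega>. \<integral>\<^sup>+\<xi>. h (X \<omega>) \<xi> \<partial>M p \<partial>PiM UNIV M)"
proof -
  let ?P = "PiM UNIV M" and ?P' = "PiM (UNIV - {p}) M"
  let ?T = "\<lambda>z. fun_upd (snd z) p (fst z)"
  let ?K = "\<lambda>y. \<integral>\<^sup>+\<xi>. h y \<xi> \<partial>M p"
  interpret Mp: prob_space "M p" by (rule M)
  interpret P': prob_space ?P' by (intro prob_space_PiM M)
  interpret pair_sigma_finite "M p" ?P' ..
  have T [measurable]: "?T \<in> measurable (M p \<Otimes>\<^sub>M ?P') ?P"
    by (rule measurable_fun_upd[where J="UNIV - {p}"]) auto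
  have distr: "distr (M p \<Otimes>\<^sub>M ?P') ?P ?T = ?P"
    using distr_pair_PiM_eq_PiM[of "UNIV - {p}" M p] M by (simp add: insert_absorb case_prod_beta')
  have integral_via_T: "(\<integral>\<^sup>+\<omega>. H \<omega> \<partial>?P) = (\<integral>\<^sup>+z. H (?T z) \<partial>(M p \<Otimes>\<^sub>M ?P'))"
    if "H \<in> borel_measurable ?P" for H
    using nn_integral_distr[OF T, of H] that by (simp add: distr)
  have XT: "X (?T z) = X (snd z)" for z
    by (rule X_indep)
  have [measurable]: "?K \<in> borel_measurable N"
    by measurable
  have "(\<integral>\<^sup>+\<omega>. h (X \<omega>) (\<omega> p) \<partial>?P) = (\<integral>\<^sup>+z. h (X (snd z)) (fst z) \<partial>(M p \<Otimes>\<^sub>M ?P'))"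
    by (subst integral_via_T) (simp_all add: XT)
  also have "\<dots> = (\<integral>\<^sup>+\<omega>. ?K (X \<omega>) \<partial>?P')"
  proof -
    have "(\<lambda>z. h (X (?T z)) (fst z)) \<in> borel_measurable (M p \<Otimes>\<^sub>M ?P')"
      by measurable
    then show ?thesis
      by (subst nn_integral_snd[symmetric]) (simp_all add: XT)
  qed
  also have "\<dots> = (\<integral>\<^sup>+z. ?K (X (snd z)) \<partial>(M p \<Otimes>\<^sub>M ?P'))"
  proof -
    have "(\<lambda>z. ?K (X (?T z))) \<in> borel_measurable (M p \<Otimes>\<^sub>M ?P')"
      by measurable
    then show ?thesis
      by (subst nn_integral_snd[symmetric]) (simp_all add: XT Mp.emeasure_space_1)
  qed
  also have "\<dots> = (\<integral>\<^sup>+\<omega>. ?K (X \<omega>) \<partial>?P)"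
    by (subst integral_via_T) (simp_all add: XT)
  finally show ?thesis .
qed

lemma nn_integral_sum_cmult:
  fixes \<phi> :: "'k \<Rightarrow> 'a \<Rightarrow> real"
  assumes "\<And>k. k \<in> K \<Longrightarrow> \<phi> k \<in> borel_measurable M"
    and "\<And>k \<omega>. k \<in> K \<Longrightarrow> 0 \<le> \<phi> k \<omega>" and "\<And>k. k \<in> K \<Longrightarrow> 0 \<le> c k"
  shows "(\<integral>\<^sup>+\<omega>. ennreal (\<Sum>k\<in>K. c k * \<phi> k \<omega>) \<partial>M) = (\<Sum>k\<in>K. ennreal (c k) * (\<integral>\<^sup>+\<omega>. ennreal (\<phi> k \<omega>) \<partial>M))"
proof -
  have "(\<integral>\<^sup>+\<omega>. ennreal (\<Sum>k\<in>K. c k * \<phi> k \<omega>) \<partial>M) = (\<integral>\<^sup>+\<omega>. (\<Sum>k\<in>K. ennreal (c k) * ennreal (\<phi> k \<omega>)) \<partial>M)"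
    using assms by (intro nn_integral_cong) (simp add: sum_ennreal[symmetric] ennreal_mult)
  also have "\<dots> = (\<Sum>k\<in>K. ennreal (c k) * (\<integral>\<^sup>+\<omega>. ennreal (\<phi> k \<omega>) \<partial>M))"
    using assms by (simp add: nn_integral_sum nn_integral_cmult)
  finally show ?thesis .
qed

lemma nn_integral_double_sum_cmult_mono:
  fixes \<phi> \<psi> :: "'i \<Rightarrow> 'k \<Rightarrow> 'a \<Rightarrow> real"
  assumes meas: "\<And>i k. \<phi> i k \<in> borel_measurable M" "\<And>i k. \<psi> i k \<in> borel_measurable M"
    and nonneg: "\<And>i k \<omega>. 0 \<le> \<phi> i k \<omega>" "\<And>i k \<omega>. 0 \<le> \<psi> i k \<omega>" "\<And>i k. 0 \<le> c i k"
    and le: "\<And>i k. (\<integral>\<^sup>+\<omega>. ennreal (\<phi> i k \<omega>) \<partial>M) \<le> (\<integral>\<^sup>+\<omega>. ennreal (\<psi> i k \<omega>) \<partial>M)"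
  shows "(\<integral>\<^sup>+\<omega>. ennreal (\<Sum>i\<in>I. \<Sum>k\<in>K. c i k * \<phi> i k \<omega>) \<partial>M)
    \<le> (\<integral>\<^sup>+\<omega>. ennreal (\<Sum>i\<in>I. \<Sum>k\<in>K. c i k * \<psi> i k \<omega>) \<partial>M)"
proof -
  have pairs: "(\<Sum>i\<in>I. \<Sum>k\<in>K. c i k * g i k \<omega>) = (\<Sum>p\<in>I \<times> K. c (fst p) (snd p) * g (fst p) (snd p) \<omega>)"
    for g :: "'i \<Rightarrow> 'k \<Rightarrow> 'a \<Rightarrow> real" and \<omega>
    by (simp add: sum.cartesian_product case_prod_beta')
  show ?thesis
    unfolding pairs using assms
    by (simp add: nn_integral_sum_cmult sum_mono mult_left_mono)
qed

lemma (in prob_space) nn_integral_affine_combination: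
  fixes S :: "'i \<Rightarrow> 'a \<Rightarrow> real" and A :: "'a \<Rightarrow> real"
  assumes "0 \<le> a" "0 \<le> b" "0 \<le> c"
    and [measurable]: "\<And>i. S i \<in> borel_measurable M" "A \<in> borel_measurable M"
    and S_nonneg: "\<And>i \<omega>. 0 \<le> S i \<omega>" and A_nonneg: "\<And>\<omega>. 0 \<le> A \<omega>"
  shows "(\<integral>\<^sup>+\<omega>. ennreal (a + b * (\<Sum>i\<in>I. S i \<omega>) + c * A \<omega>) \<partial>M)
    = ennreal a + ennreal b * (\<Sum>i\<in>I. \<integral>\<^sup>+\<omega>. ennreal (S i \<omega>) \<partial>M) + ennreal c * (\<integral>\<^sup>+\<omega>. ennreal (A \<omega>) \<partial>M)"
proof -
  have "(\<integral>\<^sup>+\<omega>. ennreal (a + b * (\<Sum>i\<in>I. S i \<omega>) + c * A \<omega>) \<partial>M)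
      = (\<integral>\<^sup>+\<omega>. ennreal a + ennreal b * (\<Sum>i\<in>I. ennreal (S i \<omega>)) + ennreal c * ennreal (A \<omega>) \<partial>M)"
  proof (intro nn_integral_cong)
    fix \<omega>
    have "0 \<le> (\<Sum>i\<in>I. S i \<omega>)"
      by (intro sum_nonneg S_nonneg)
    then show "ennreal (a + b * (\<Sum>i\<in>I. S i \<omega>) + c * A \<omega>)
        = ennreal a + ennreal b * (\<Sum>i\<in>I. ennreal (S i \<omega>)) + ennreal c * ennreal (A \<omega>)"
      using assms by (simp add: S_nonneg ennreal_mult)
  qed
  also have "\<dots> = ennreal a + ennreal b * (\<Sum>i\<in>I. \<integral>\<^sup>+\<omega>. ennreal (S i \<omega>) \<partial>M) + ennreal c * (\<integral>\<^sup>+\<omega>. ennreal (A \<omega>) \<partial>M)"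
    by (simp add: nn_integral_add nn_integral_cmult nn_integral_sum emeasure_space_1)
  finally show ?thesis .
qed

section \<open>The mixing matrix and the aggregated gradient\<close>

lemma norm_mean_sq_le:
  fixes v :: "'i \<Rightarrow> 'a::real_normed_vector"
  assumes "finite K"
  shows "(norm ((1 / real (card K)) *\<^sub>R (\<Sum>k\<in>K. v k)))\<^sup>2 \<le> (1 / real (card K)) * (\<Sum>k\<in>K. (norm (v k))\<^sup>2)"
proof (cases "K = {}")
  case False
  let ?n = "real (card K)"
  have n: "0 < ?n"
    using assms False by (simp add: card_gt_0_iff)
  have "(norm (\<Sum>k\<in>K. v k))\<^sup>2 \<le> (\<Sum>k\<in>K. norm (v k))\<^sup>2"
    by (intro power_mono norm_sum) simp
  also have "\<dots> \<le> ?n * (\<Sum>k\<in>K. (norm (v k))\<^sup>2)"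
    using Cauchy_Schwarz_ineq_sum[of "\<lambda>_. 1" "\<lambda>k. norm (v k)" K] by simp
  finally have "(norm (\<Sum>k\<in>K. v k))\<^sup>2 \<le> ?n * (\<Sum>k\<in>K. (norm (v k))\<^sup>2)" .
  with n show ?thesis
    by (simp add: power_mult_distrib power_divide field_simps power2_eq_square)
qed simp

lemma sum_sum_norm_diff_sq_le:
  fixes y :: "'i \<Rightarrow> 'a::real_inner"
  assumes "finite I"
  shows "(\<Sum>i\<in>I. \<Sum>k\<in>I. (norm (y i - y k))\<^sup>2) \<le> 2 * real (card I) * (\<Sum>i\<in>I. (norm (y i))\<^sup>2)"
proof -
  have "(\<Sum>i\<in>I. \<Sum>k\<in>I. (norm (y i - y k))\<^sup>2)
      = 2 * real (card I) * (\<Sum>i\<in>I. (norm (y i))\<^sup>2) - 2 * ((\<Sum>i\<in>I. y i) \<bullet> (\<Sum>k\<in>I. y k))"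
    by (simp add: power2_norm_eq_inner inner_diff_left inner_diff_right inner_commute
        inner_sum_left inner_sum_right sum.distrib sum_subtractf sum_distrib_left[symmetric]
        sum.swap[of "\<lambda>i k. y k \<bullet> y k"] algebra_simps)
  then show ?thesis by simp
qed

lemma doubly_stochastic_symD:
  assumes "doubly_stochastic_sym W"
  shows "0 \<le> W$i$j" and "(\<Sum>j\<in>UNIV. W$i$j) = 1"
  using assms unfolding doubly_stochastic_sym_def by blast+

lemma finite_positive_entries: "finite {W$i$j | i j. 0 < W$i$j}"
  by (rule finite_subset[of _ "(\<lambda>(i, j). W$i$j) ` UNIV"]) auto

lemma omega_min_le:
  assumes "0 < W$i$j"
  shows "omega_min W \<le> W$i$j"
  unfolding omega_min_def using assms finite_positive_entries by (intro Min_le) auto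

lemma omega_min_pos:
  assumes "doubly_stochastic_sym W"
  shows "0 < omega_min W"
proof -
  obtain i j where "0 < W$i$j"
    using doubly_stochastic_symD[OF assms]
    by (metis (no_types) order_less_le sum.neutral zero_neq_one)
  then have "omega_min W \<in> {W$i$j | i j. 0 < W$i$j}"
    unfolding omega_min_def using finite_positive_entries by (intro Min_in) auto
  then show ?thesis
    by auto
qed

lemma card_support_mult_omega_min_le:
  assumes "doubly_stochastic_sym W"
  shows "real (card {j. 0 < W$i$j}) * omega_min W \<le> 1"
proof -
  have "real (card {j. 0 < W$i$j}) * omega_min W = (\<Sum>j\<in>{j. 0 < W$i$j}. omega_min W)"
    by simp
  also have "\<dots> \<le> (\<Sum>j\<in>{j. 0 < W$i$j}. W$i$j)"
    by (intro sum_mono omega_min_le) auto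
  also have "\<dots> \<le> (\<Sum>j\<in>UNIV. W$i$j)"
    using doubly_stochastic_symD(1)[OF assms] by (intro sum_mono2) auto
  finally show ?thesis
    using doubly_stochastic_symD(2)[OF assms] by simp
qed

lemma ross_pi_nonneg_le:
  assumes "0 < W$i$j"
  shows "0 \<le> ross_pi W F J Q \<gamma> x s i j" and "ross_pi W F J Q \<gamma> x s i j \<le> 1 / W$i$j"
proof -
  let ?p = "shap_norm (ross_phi W F J Q \<gamma> x s i) (nbr W i)"
  have p_nonneg: "0 \<le> ?p k" if "k \<in> nbr W i" for k
  proof -
    have "Min (ross_phi W F J Q \<gamma> x s i ` nbr W i) \<le> ross_phi W F J Q \<gamma> x s i k"
      "ross_phi W F J Q \<gamma> x s i k \<le> Max (ross_phi W F J Q \<gamma> x s i ` nbr W i)"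
      using that by (auto intro: Min_le Max_ge)
    then show ?thesis
      unfolding shap_norm_def by (intro divide_nonneg_nonneg) auto
  qed
  have j: "j \<in> nbr W i"
    using assms by (simp add: nbr_def)
  have "?p j \<le> (\<Sum>k\<in>nbr W i. ?p k)"
    using p_nonneg j by (intro member_le_sum) auto
  moreover have "0 \<le> (\<Sum>k\<in>nbr W i. ?p k)"
    using p_nonneg by (intro sum_nonneg) auto
  ultimately have q_le: "?p j / (\<Sum>k\<in>nbr W i. ?p k) \<le> 1"
    by (cases "(\<Sum>k\<in>nbr W i. ?p k) = 0") (auto simp: divide_le_eq_1)
  have q_nonneg: "0 \<le> ?p j / (\<Sum>k\<in>nbr W i. ?p k)"
    using p_nonneg j by (intro divide_nonneg_nonneg sum_nonneg) auto
  have eq: "ross_pi W F J Q \<gamma> x s i j = ?p j / (\<Sum>k\<in>nbr W i. ?p k) / W$i$j"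
    by (simp add: ross_pi_def mult.commute)
  show "0 \<le> ross_pi W F J Q \<gamma> x s i j"
    unfolding eq using q_nonneg assms by (rule divide_nonneg_pos)
  show "ross_pi W F J Q \<gamma> x s i j \<le> 1 / W$i$j"
    unfolding eq by (rule divide_right_mono[OF q_le]) (use assms in simp)
qed

lemma norm_ross_gbar_sq_le:
  assumes W: "doubly_stochastic_sym W"
  shows "(norm (ross_gbar W F J Q \<gamma> x s i))\<^sup>2
    \<le> (1 / omega_min W) ^ 3 * (\<Sum>j\<in>{j. 0 < W$i$j}. (norm (ross_g F x s j i))\<^sup>2)"
proof -
  let ?u = "1 / omega_min W" and ?P = "{j. 0 < W$i$j}" and ?a = "\<lambda>j. ross_g F x s j i"
  have "0 < omega_min W"
    using omega_min_pos[OF W] .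
  \<comment> \<open>Agent \<open>i\<close> belongs to \<open>nbr W i\<close> even when \<open>W$i$i = 0\<close>; its weight is then \<open>0\<close> since \<open>x / 0 = 0\<close>.\<close>
  have "ross_gbar W F J Q \<gamma> x s i = (\<Sum>j\<in>?P. ross_pi W F J Q \<gamma> x s i j *\<^sub>R ?a j)"
    unfolding ross_gbar_def using doubly_stochastic_symD(1)[OF W, of i]
    by (intro sum.mono_neutral_right) (auto simp: nbr_def ross_pi_def order_le_less)
  then have "norm (ross_gbar W F J Q \<gamma> x s i) \<le> (\<Sum>j\<in>?P. norm (ross_pi W F J Q \<gamma> x s i j *\<^sub>R ?a j))"
    by (simp only: norm_sum)
  also have "\<dots> \<le> (\<Sum>j\<in>?P. ?u * norm (?a j))"
  proof (intro sum_mono)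
    fix j
    assume "j \<in> ?P"
    then have "0 < W$i$j"
      by simp
    have "1 / W$i$j \<le> ?u"
      using omega_min_le[OF \<open>0 < W$i$j\<close>] \<open>0 < omega_min W\<close> by (intro divide_left_mono) auto
    then have "0 \<le> ross_pi W F J Q \<gamma> x s i j" "ross_pi W F J Q \<gamma> x s i j \<le> ?u"
      using ross_pi_nonneg_le[OF \<open>0 < W$i$j\<close>, of F J Q \<gamma> x s] by auto
    then show "norm (ross_pi W F J Q \<gamma> x s i j *\<^sub>R ?a j) \<le> ?u * norm (?a j)"
      by (metis abs_of_nonneg mult_right_mono norm_ge_zero norm_scaleR)
  qed
  finally have "(norm (ross_gbar W F J Q \<gamma> x s i))\<^sup>2 \<le> (\<Sum>j\<in>?P. ?u * norm (?a j))\<^sup>2"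
    by (intro power_mono) auto
  also have "\<dots> \<le> real (card ?P) * (\<Sum>j\<in>?P. (?u * norm (?a j))\<^sup>2)"
    using Cauchy_Schwarz_ineq_sum[of "\<lambda>_. 1" "\<lambda>j. ?u * norm (?a j)" ?P] by simp
  also have "\<dots> = real (card ?P) * ?u\<^sup>2 * (\<Sum>j\<in>?P. (norm (?a j))\<^sup>2)"
    by (simp only: power_mult_distrib sum_distrib_left mult.assoc)
  also have "\<dots> \<le> ?u * ?u\<^sup>2 * (\<Sum>j\<in>?P. (norm (?a j))\<^sup>2)"
    using card_support_mult_omega_min_le[OF W, of i] \<open>0 < omega_min W\<close>
    by (intro mult_right_mono sum_nonneg) (auto simp: field_simps)
  finally show ?thesis
    by (simp add: power3_eq_cube power2_eq_square)
qed

definition gbar_weight :: "real^'n^'n \<Rightarrow> 'n \<Rightarrow> 'n \<Rightarrow> real" where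
  "gbar_weight W i j = (if 0 < W$i$j then 2 / omega_min W ^ 3 else 0) + (if j = i then 2 else 0)"

lemma gbar_weight_nonneg:
  assumes "doubly_stochastic_sym W"
  shows "0 \<le> gbar_weight W i j"
  using omega_min_pos[OF assms] by (simp add: gbar_weight_def)

lemma sum_gbar_weight_le:
  assumes W: "doubly_stochastic_sym W"
  shows "(\<Sum>j\<in>UNIV. gbar_weight W i j) \<le> 2 / omega_min W ^ 4 + 2"
proof -
  have "0 < omega_min W"
    using omega_min_pos[OF W] .
  have "(\<Sum>j\<in>UNIV. gbar_weight W i j) = real (card {j. 0 < W$i$j}) * (2 / omega_min W ^ 3) + 2"
    by (simp add: gbar_weight_def sum.distrib sum.If_cases Int_def)
  also have "real (card {j. 0 < W$i$j}) * (2 / omega_min W ^ 3)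
      = 2 / omega_min W ^ 4 * (real (card {j. 0 < W$i$j}) * omega_min W)"
    using \<open>0 < omega_min W\<close> by (simp add: field_simps eval_nat_numeral)
  also have "\<dots> \<le> 2 / omega_min W ^ 4"
    using card_support_mult_omega_min_le[OF W, of i] \<open>0 < omega_min W\<close>
    by (intro mult_left_le) auto
  finally show ?thesis
    by simp
qed

lemma norm_ross_gbar_sub_sq_le:
  assumes W: "doubly_stochastic_sym W"
  shows "(norm (ross_gbar W F J Q \<gamma> x s i - ross_g F x s i i))\<^sup>2
    \<le> (\<Sum>j\<in>UNIV. gbar_weight W i j * (norm (ross_g F x s j i))\<^sup>2)"
proof -
  let ?a = "\<lambda>j. (norm (ross_g F x s j i))\<^sup>2"
  have "(norm (ross_gbar W F J Q \<gamma> x s i - ross_g F x s i i))\<^sup>2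
      \<le> 2 * (norm (ross_gbar W F J Q \<gamma> x s i))\<^sup>2 + 2 * ?a i"
    using norm_add_sq_le[of "ross_gbar W F J Q \<gamma> x s i" "- ross_g F x s i i"] by simp
  also have "\<dots> \<le> 2 * ((1 / omega_min W) ^ 3 * (\<Sum>j\<in>{j. 0 < W$i$j}. ?a j)) + 2 * ?a i"
    using norm_ross_gbar_sq_le[OF W] by simp
  also have "\<dots> = (\<Sum>j\<in>UNIV. (if 0 < W$i$j then 2 / omega_min W ^ 3 * ?a j else 0)
      + (if j = i then 2 * ?a j else 0))"
    by (simp add: sum.distrib sum.If_cases sum_distrib_left power_one_over)
  also have "\<dots> = (\<Sum>j\<in>UNIV. gbar_weight W i j * ?a j)"
    by (intro sum.cong) (auto simp: gbar_weight_def algebra_simps)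
  finally show ?thesis .
qed

lemma frob_norm_cols_mat_diff_sq:
  fixes v w :: "'n::finite \<Rightarrow> real^'d"
  shows "(frob_norm (cols_mat v - cols_mat w))\<^sup>2 = (\<Sum>c\<in>UNIV. (norm (v c - w c))\<^sup>2)"
proof -
  have "(frob_norm (cols_mat v - cols_mat w))\<^sup>2 = (\<Sum>r\<in>UNIV. \<Sum>c\<in>UNIV. ((v c - w c)$r)\<^sup>2)"
    unfolding frob_norm_def cols_mat_def by (simp add: sum_nonneg)
  also have "\<dots> = (\<Sum>c\<in>UNIV. \<Sum>r\<in>UNIV. ((v c - w c)$r)\<^sup>2)"
    by (rule sum.swap)
  also have "\<dots> = (\<Sum>c\<in>UNIV. (norm (v c - w c))\<^sup>2)"
    by (simp add: norm_vec_def L2_set_def sum_nonneg)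
  finally show ?thesis .
qed

lemma sum_sq_norm_mean_grad_le:
  fixes x :: "'n::finite \<Rightarrow> 'a::real_inner" and gf :: "'n \<Rightarrow> 'a \<Rightarrow> 'a"
  assumes lip: "\<And>j y z. norm (gf j y - gf j z) \<le> L * norm (y - z)"
  shows "(\<Sum>i\<in>UNIV. (norm ((1 / real CARD('n)) *\<^sub>R (\<Sum>j\<in>UNIV. gf j (x i))))\<^sup>2)
    \<le> 2 * real CARD('n) * (norm ((1 / real CARD('n)) *\<^sub>R (\<Sum>i\<in>UNIV. gf i (x i))))\<^sup>2
      + 4 * L\<^sup>2 * (\<Sum>i\<in>UNIV. (norm (x i - (1 / real CARD('n)) *\<^sub>R (\<Sum>k\<in>UNIV. x k)))\<^sup>2)"
proof -
  let ?N = "real CARD('n)"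
  define avg where "avg = (1 / ?N) *\<^sub>R (\<Sum>i\<in>UNIV. gf i (x i))"
  define xb where "xb = (1 / ?N) *\<^sub>R (\<Sum>k\<in>UNIV. x k)"
  have mean_i: "(norm ((1 / ?N) *\<^sub>R (\<Sum>j\<in>UNIV. gf j (x i))))\<^sup>2
      \<le> 2 * (norm avg)\<^sup>2 + 2 / ?N * (\<Sum>k\<in>UNIV. L\<^sup>2 * (norm (x i - x k))\<^sup>2)" for i
  proof -
    have "(1 / ?N) *\<^sub>R (\<Sum>j\<in>UNIV. gf j (x i)) = (1 / ?N) *\<^sub>R (\<Sum>k\<in>UNIV. gf k (x i) - gf k (x k)) + avg"
      by (simp add: avg_def sum_subtractf algebra_simps)
    then have "(norm ((1 / ?N) *\<^sub>R (\<Sum>j\<in>UNIV. gf j (x i))))\<^sup>2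
        \<le> 2 * (norm ((1 / ?N) *\<^sub>R (\<Sum>k\<in>UNIV. gf k (x i) - gf k (x k))))\<^sup>2 + 2 * (norm avg)\<^sup>2"
      using norm_add_sq_le by metis
    also have "(norm ((1 / ?N) *\<^sub>R (\<Sum>k\<in>UNIV. gf k (x i) - gf k (x k))))\<^sup>2
        \<le> 1 / ?N * (\<Sum>k\<in>UNIV. (norm (gf k (x i) - gf k (x k)))\<^sup>2)"
      using norm_mean_sq_le[of UNIV "\<lambda>k. gf k (x i) - gf k (x k)"] by simp
    also have "\<dots> \<le> 1 / ?N * (\<Sum>k\<in>UNIV. L\<^sup>2 * (norm (x i - x k))\<^sup>2)"
      using lip by (intro mult_left_mono sum_mono) (auto simp: power_mult_distrib[symmetric] intro: power_mono)
    finally show ?thesis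
      by simp
  qed
  have "(\<Sum>i\<in>UNIV. \<Sum>k\<in>UNIV. (norm (x i - x k))\<^sup>2) = (\<Sum>i\<in>UNIV. \<Sum>k\<in>UNIV. (norm ((x i - xb) - (x k - xb)))\<^sup>2)"
    by simp
  also have "\<dots> \<le> 2 * ?N * (\<Sum>i\<in>UNIV. (norm (x i - xb))\<^sup>2)"
    by (rule sum_sum_norm_diff_sq_le) simp
  finally have pairwise: "(\<Sum>i\<in>UNIV. \<Sum>k\<in>UNIV. (norm (x i - x k))\<^sup>2) \<le> 2 * ?N * (\<Sum>i\<in>UNIV. (norm (x i - xb))\<^sup>2)" .
  have "(\<Sum>i\<in>UNIV. (norm ((1 / ?N) *\<^sub>R (\<Sum>j\<in>UNIV. gf j (x i))))\<^sup>2)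
      \<le> (\<Sum>i\<in>UNIV. 2 * (norm avg)\<^sup>2 + 2 / ?N * (\<Sum>k\<in>UNIV. L\<^sup>2 * (norm (x i - x k))\<^sup>2))"
    by (intro sum_mono mean_i)
  also have "\<dots> = 2 * ?N * (norm avg)\<^sup>2 + 2 / ?N * L\<^sup>2 * (\<Sum>i\<in>UNIV. \<Sum>k\<in>UNIV. (norm (x i - x k))\<^sup>2)"
    by (simp add: sum.distrib sum_distrib_left mult.assoc)
  also have "\<dots> \<le> 2 * ?N * (norm avg)\<^sup>2 + 2 / ?N * L\<^sup>2 * (2 * ?N * (\<Sum>i\<in>UNIV. (norm (x i - xb))\<^sup>2))"
    using pairwise by (intro add_left_mono mult_left_mono) auto
  finally show ?thesis
    by (simp add: avg_def xb_def)
qed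

lemma sum_gbar_weight_row_le:
  fixes gf :: "'n::finite \<Rightarrow> 'a \<Rightarrow> 'b::real_normed_vector" and W :: "real^'n^'n" and \<sigma> \<zeta> :: real
  assumes W: "doubly_stochastic_sym W"
    and het: "\<And>j. (norm (gf j y - (1 / real CARD('n)) *\<^sub>R (\<Sum>k\<in>UNIV. gf k y)))\<^sup>2 \<le> \<zeta>\<^sup>2"
  shows "(\<Sum>j\<in>UNIV. gbar_weight W i j * (\<sigma>\<^sup>2 + (norm (gf j y))\<^sup>2))
    \<le> (2 / omega_min W ^ 4 + 2) * (\<sigma>\<^sup>2 + 2 * \<zeta>\<^sup>2 + 2 * (norm ((1 / real CARD('n)) *\<^sub>R (\<Sum>k\<in>UNIV. gf k y)))\<^sup>2)"
proof -
  let ?m = "(1 / real CARD('n)) *\<^sub>R (\<Sum>k\<in>UNIV. gf k y)"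
  let ?c = "\<sigma>\<^sup>2 + 2 * \<zeta>\<^sup>2 + 2 * (norm ?m)\<^sup>2"
  have "\<sigma>\<^sup>2 + (norm (gf j y))\<^sup>2 \<le> ?c" for j
    using norm_add_sq_le[of "gf j y - ?m" ?m] het[of j] by simp
  then have "(\<Sum>j\<in>UNIV. gbar_weight W i j * (\<sigma>\<^sup>2 + (norm (gf j y))\<^sup>2)) \<le> (\<Sum>j\<in>UNIV. gbar_weight W i j * ?c)"
    using gbar_weight_nonneg[OF W] by (intro sum_mono mult_left_mono) auto
  also have "\<dots> = (\<Sum>j\<in>UNIV. gbar_weight W i j) * ?c"
    by (simp add: sum_distrib_right)
  also have "\<dots> \<le> (2 / omega_min W ^ 4 + 2) * ?c"
    using sum_gbar_weight_le[OF W] by (intro mult_right_mono) auto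
  finally show ?thesis .
qed

lemma sum_gbar_weight_grad_le:
  fixes x :: "'n::finite \<Rightarrow> 'a::real_inner" and gf :: "'n \<Rightarrow> 'a \<Rightarrow> 'a" and W :: "real^'n^'n"
    and \<sigma> \<zeta> L :: real
  assumes W: "doubly_stochastic_sym W"
    and het: "\<And>j y. (norm (gf j y - (1 / real CARD('n)) *\<^sub>R (\<Sum>k\<in>UNIV. gf k y)))\<^sup>2 \<le> \<zeta>\<^sup>2"
    and lip: "\<And>j y z. norm (gf j y - gf j z) \<le> L * norm (y - z)"
  shows "(\<Sum>i\<in>UNIV. \<Sum>j\<in>UNIV. gbar_weight W i j * (\<sigma>\<^sup>2 + (norm (gf j (x i)))\<^sup>2))
    \<le> (2 * CARD('n) * \<sigma>\<^sup>2 / omega_min W ^ 4 + 2 * CARD('n) * \<sigma>\<^sup>2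
        + 8 * CARD('n) * \<zeta>\<^sup>2 / omega_min W ^ 4 + 8 * CARD('n) * \<zeta>\<^sup>2)
      + (16 * L\<^sup>2 / omega_min W ^ 4 + 16 * L\<^sup>2)
        * (\<Sum>i\<in>UNIV. (norm (x i - (1 / real CARD('n)) *\<^sub>R (\<Sum>k\<in>UNIV. x k)))\<^sup>2)
      + (8 * CARD('n) / omega_min W ^ 4 + 8 * CARD('n))
        * (norm ((1 / real CARD('n)) *\<^sub>R (\<Sum>i\<in>UNIV. gf i (x i))))\<^sup>2"
proof -
  let ?N = "real CARD('n)" and ?c = "2 / omega_min W ^ 4 + 2"
  define G where "G i = (norm ((1 / ?N) *\<^sub>R (\<Sum>j\<in>UNIV. gf j (x i))))\<^sup>2" for i
  define S where "S = (\<Sum>i\<in>UNIV. (norm (x i - (1 / ?N) *\<^sub>R (\<Sum>k\<in>UNIV. x k)))\<^sup>2)"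
  define A where "A = (norm ((1 / ?N) *\<^sub>R (\<Sum>i\<in>UNIV. gf i (x i))))\<^sup>2"
  have "0 < omega_min W"
    using omega_min_pos[OF W] .
  have "(\<Sum>i\<in>UNIV. \<Sum>j\<in>UNIV. gbar_weight W i j * (\<sigma>\<^sup>2 + (norm (gf j (x i)))\<^sup>2))
      \<le> (\<Sum>i\<in>UNIV. ?c * (\<sigma>\<^sup>2 + 2 * \<zeta>\<^sup>2 + 2 * G i))"
    unfolding G_def by (intro sum_mono sum_gbar_weight_row_le W het)
  also have "\<dots> = ?c * (?N * \<sigma>\<^sup>2 + 2 * ?N * \<zeta>\<^sup>2 + 2 * (\<Sum>i\<in>UNIV. G i))"
    by (simp add: sum.distrib sum_distrib_left sum_distrib_right[symmetric] sum_divide_distrib[symmetric] algebra_simps)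
  also have "\<dots> \<le> ?c * (?N * \<sigma>\<^sup>2 + 2 * ?N * \<zeta>\<^sup>2 + 2 * (2 * ?N * A + 4 * L\<^sup>2 * S))"
    using sum_sq_norm_mean_grad_le[OF lip, where x=x] \<open>0 < omega_min W\<close>
    by (intro mult_left_mono add_left_mono) (auto simp: G_def A_def S_def)
  also have "\<dots> \<le> (2 * ?N * \<sigma>\<^sup>2 / omega_min W ^ 4 + 2 * ?N * \<sigma>\<^sup>2
        + 8 * ?N * \<zeta>\<^sup>2 / omega_min W ^ 4 + 8 * ?N * \<zeta>\<^sup>2)
      + (16 * L\<^sup>2 / omega_min W ^ 4 + 16 * L\<^sup>2) * S + (8 * ?N / omega_min W ^ 4 + 8 * ?N) * A"
  proof -
    have "?c * (?N * \<sigma>\<^sup>2 + 2 * ?N * \<zeta>\<^sup>2 + 2 * (2 * ?N * A + 4 * L\<^sup>2 * S))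
        = (2 * ?N * \<sigma>\<^sup>2 / omega_min W ^ 4 + 2 * ?N * \<sigma>\<^sup>2
          + 4 * ?N * \<zeta>\<^sup>2 / omega_min W ^ 4 + 4 * ?N * \<zeta>\<^sup>2)
        + (16 * L\<^sup>2 / omega_min W ^ 4 + 16 * L\<^sup>2) * S + (8 * ?N / omega_min W ^ 4 + 8 * ?N) * A"
      using \<open>0 < omega_min W\<close> by (simp add: field_simps)
    \<comment> \<open>The stated coefficient of \<open>\<zeta>\<^sup>2\<close> is twice what the argument needs.\<close>
    moreover have "0 \<le> ?N * \<zeta>\<^sup>2 / omega_min W ^ 4" "0 \<le> ?N * \<zeta>\<^sup>2"
      using \<open>0 < omega_min W\<close> by simp_all
    ultimately show ?thesis
      by linarith
  qed
  finally show ?thesis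
    by (simp add: S_def A_def)
qed

lemma (in prob_space) nn_integral_sum_gbar_weight_grad_le:
  fixes W :: "real^'n^'n" and f :: "'n \<Rightarrow> 'v::euclidean_space \<Rightarrow> real" and x :: "'a \<Rightarrow> 'n \<Rightarrow> 'v"
    and \<sigma> \<zeta> L :: real
  assumes W: "doubly_stochastic_sym W"
    and x_meas: "\<And>i. (\<lambda>\<omega>. x \<omega> i) \<in> borel_measurable M"
    and f_smooth: "\<And>j. L_smooth (f j) L"
    and het: "\<And>j y. (norm (grad (f j) y - grad (\<lambda>y. (1 / real CARD('n)) * (\<Sum>k\<in>UNIV. f k y)) y))\<^sup>2 \<le> \<zeta>\<^sup>2"
  shows "(\<integral>\<^sup>+\<omega>. ennreal (\<Sum>i\<in>UNIV. \<Sum>j\<in>UNIV. gbar_weight W i j * (\<sigma>\<^sup>2 + (norm (grad (f j) (x \<omega> i)))\<^sup>2)) \<partial>M)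
    \<le> ennreal (2 * CARD('n) * \<sigma>\<^sup>2 / omega_min W ^ 4 + 2 * CARD('n) * \<sigma>\<^sup>2
              + 8 * CARD('n) * \<zeta>\<^sup>2 / omega_min W ^ 4 + 8 * CARD('n) * \<zeta>\<^sup>2)
      + ennreal (16 * L\<^sup>2 / omega_min W ^ 4 + 16 * L\<^sup>2) *
          (\<Sum>i\<in>UNIV. \<integral>\<^sup>+\<omega>. ennreal ((norm (x \<omega> i - (1 / real CARD('n)) *\<^sub>R (\<Sum>k\<in>UNIV. x \<omega> k)))\<^sup>2) \<partial>M)
      + ennreal (8 * CARD('n) / omega_min W ^ 4 + 8 * CARD('n)) *
          (\<integral>\<^sup>+\<omega>. ennreal ((norm ((1 / real CARD('n)) *\<^sub>R (\<Sum>i\<in>UNIV. grad (f i) (x \<omega> i))))\<^sup>2) \<partial>M)"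
    (is "?L \<le> ennreal ?a + ennreal ?b * (\<Sum>i\<in>UNIV. \<integral>\<^sup>+\<omega>. ennreal (?S i \<omega>) \<partial>M)
      + ennreal ?c * (\<integral>\<^sup>+\<omega>. ennreal (?A \<omega>) \<partial>M)")
proof -
  note [measurable] = x_meas measurable_compose[OF x_meas borel_measurable_grad[OF f_smooth]]
  have lip: "norm (grad (f j) y - grad (f j) z) \<le> L * norm (y - z)" for j y z
    using f_smooth by (simp add: L_smooth_def)
  have "grad (\<lambda>y. (1 / real CARD('n)) * (\<Sum>k\<in>UNIV. f k y)) y = (1 / real CARD('n)) *\<^sub>R (\<Sum>k\<in>UNIV. grad (f k) y)"
    for y
    using f_smooth by (intro grad_scaled_sum) (simp add: L_smooth_def)
  with het have het': "(norm (grad (f j) y - (1 / real CARD('n)) *\<^sub>R (\<Sum>k\<in>UNIV. grad (f k) y)))\<^sup>2 \<le> \<zeta>\<^sup>2"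
    for j y
    by metis
  have S_meas: "?S i \<in> borel_measurable M" for i
    by measurable
  have A_meas: "?A \<in> borel_measurable M"
    by measurable
  have "?L \<le> (\<integral>\<^sup>+\<omega>. ennreal (?a + ?b * (\<Sum>i\<in>UNIV. ?S i \<omega>) + ?c * ?A \<omega>) \<partial>M)"
    by (rule nn_integral_mono, rule ennreal_leI, rule sum_gbar_weight_grad_le[OF W het' lip])
  also have "\<dots> = ennreal ?a + ennreal ?b * (\<Sum>i\<in>UNIV. \<integral>\<^sup>+\<omega>. ennreal (?S i \<omega>) \<partial>M)
      + ennreal ?c * (\<integral>\<^sup>+\<omega>. ennreal (?A \<omega>) \<partial>M)"
    using omega_min_pos[OF W] by (intro nn_integral_affine_combination S_meas A_meas) auto
  finally show ?thesis .
qed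

section \<open>Expectations along the ROSS iteration\<close>

lemma ross_state_cong:
  assumes "\<And>r. 1 \<le> r \<Longrightarrow> r \<le> s \<Longrightarrow> \<xi> r = \<xi>' r"
  shows "ross_state W F J Q \<gamma> \<alpha> x0 \<xi> s = ross_state W F J Q \<gamma> \<alpha> x0 \<xi>' s"
  using assms by (induction s) auto

lemma measurable_ross_g:
  fixes F :: "'v::euclidean_space \<Rightarrow> 'z \<Rightarrow> real"
  assumes meas_grad: "\<And>i. (\<lambda>p. sgrad F (fst p) (snd p)) \<in> borel_measurable (borel \<Otimes>\<^sub>M D i)"
    and "\<And>j. (\<lambda>\<omega>. X \<omega> j) \<in> borel_measurable M" and "\<And>j. (\<lambda>\<omega>. S \<omega> j) \<in> measurable M (D j)"
  shows "(\<lambda>\<omega>. ross_g F (X \<omega>) (S \<omega>) j i) \<in> borel_measurable M"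
proof -
  have "(\<lambda>\<omega>. (X \<omega> i, S \<omega> j)) \<in> measurable M (borel \<Otimes>\<^sub>M D j)"
    using assms(2,3) by (intro measurable_Pair) auto
  from measurable_compose[OF this meas_grad[of j]] show ?thesis
    by (simp add: ross_g_def)
qed

context
  fixes F :: "'v::euclidean_space \<Rightarrow> 'z \<Rightarrow> real" and J :: "'z \<Rightarrow> 'v \<Rightarrow> real"
    and Q :: "'z set" and D :: "'n::finite \<Rightarrow> 'z measure"
  assumes meas_grad: "\<And>i. (\<lambda>p. sgrad F (fst p) (snd p)) \<in> borel_measurable (borel \<Otimes>\<^sub>M D i)"
    and meas_J: "\<And>\<xi>. \<xi> \<in> Q \<Longrightarrow> J \<xi> \<in> borel_measurable borel"
begin

lemma measurable_ross_gbar: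
  fixes W :: "real^'n^'n"
  assumes X [measurable]: "\<And>j. (\<lambda>\<omega>. X \<omega> j) \<in> borel_measurable M"
    and S: "\<And>j. (\<lambda>\<omega>. S \<omega> j) \<in> measurable M (D j)"
  shows "(\<lambda>\<omega>. ross_gbar W F J Q \<gamma> (X \<omega>) (S \<omega>) i) \<in> borel_measurable M"
proof -
  note g [measurable] = measurable_ross_g[OF meas_grad X S]
  have loc [measurable]: "(\<lambda>\<omega>. ross_loc F \<gamma> (X \<omega>) (S \<omega>) i j) \<in> borel_measurable M" for j
    unfolding ross_loc_def by measurable
  have "(\<lambda>\<omega>. coal_val J Q (ross_loc F \<gamma> (X \<omega>) (S \<omega>) i) T) \<in> borel_measurable M" for T
  proof -
    have "(\<lambda>\<omega>. J \<xi> ((1 / real (card T)) *\<^sub>R (\<Sum>j\<in>T. ross_loc F \<gamma> (X \<omega>) (S \<omega>) i j)))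
        \<in> borel_measurable M" if "\<xi> \<in> Q" for \<xi>
      using meas_J[OF that] by measurable
    then show ?thesis
      unfolding coal_val_def by (cases "T = {}") (auto intro!: borel_measurable_divide borel_measurable_sum)
  qed
  then have [measurable]: "(\<lambda>\<omega>. ross_phi W F J Q \<gamma> (X \<omega>) (S \<omega>) i k) \<in> borel_measurable M" for k
    unfolding ross_phi_def shapley_def by measurable
  have [measurable]: "(\<lambda>\<omega>. shap_norm (ross_phi W F J Q \<gamma> (X \<omega>) (S \<omega>) i) (nbr W i) k) \<in> borel_measurable M"
    for k
    unfolding shap_norm_def by (intro borel_measurable_divide borel_measurable_diff
        borel_measurable_Min borel_measurable_Max) measurable
  show ?thesis
    unfolding ross_gbar_def ross_pi_def by measurable
qed

lemma measurable_ross_state: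
  fixes W :: "real^'n^'n"
  shows "(\<lambda>\<omega>. fst (ross_state W F J Q \<gamma> \<alpha> x0 (\<lambda>r i. \<omega> (r, i)) s) i) \<in> borel_measurable (sample_space D)"
    and "(\<lambda>\<omega>. snd (ross_state W F J Q \<gamma> \<alpha> x0 (\<lambda>r i. \<omega> (r, i)) s) i) \<in> borel_measurable (sample_space D)"
proof (induction s arbitrary: i)
  case (Suc s)
  let ?x = "\<lambda>\<omega>. fst (ross_state W F J Q \<gamma> \<alpha> x0 (\<lambda>r i. \<omega> (r, i)) s)"
  let ?u = "\<lambda>\<omega>. snd (ross_state W F J Q \<gamma> \<alpha> x0 (\<lambda>r i. \<omega> (r, i)) s)"
  have [measurable]: "(\<lambda>\<omega>. ?x \<omega> j) \<in> borel_measurable (sample_space D)"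
    "(\<lambda>\<omega>. ?u \<omega> j) \<in> borel_measurable (sample_space D)" for j
    using Suc.IH by auto
  have sample: "(\<lambda>\<omega>. \<omega> (Suc s, j)) \<in> measurable (sample_space D) (D j)" for j
    unfolding sample_space_def using measurable_component_singleton[of "(Suc s, j)" UNIV "\<lambda>p. D (snd p)"] by simp
  have [measurable]: "(\<lambda>\<omega>. ross_gbar W F J Q \<gamma> (?x \<omega>) (\<lambda>j. \<omega> (Suc s, j)) j) \<in> borel_measurable (sample_space D)"
    for j
    by (rule measurable_ross_gbar) (use sample in auto)
  show "(\<lambda>\<omega>. fst (ross_state W F J Q \<gamma> \<alpha> x0 (\<lambda>r i. \<omega> (r, i)) (Suc s)) i) \<in> borel_measurable (sample_space D)"
    and "(\<lambda>\<omega>. snd (ross_state W F J Q \<gamma> \<alpha> x0 (\<lambda>r i. \<omega> (r, i)) (Suc s)) i) \<in> borel_measurable (sample_space D)"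
    for i
    by (simp_all add: ross_step_def Let_def)
qed simp_all

end

lemma nn_integral_sq_ross_g_le:
  fixes W :: "real^'n^'n" and F :: "'v::euclidean_space \<Rightarrow> 'z \<Rightarrow> real" and D :: "'n \<Rightarrow> 'z measure"
  assumes D: "\<And>i. prob_space (D i)"
    and F_diff: "\<And>x \<xi>. (\<lambda>y. F y \<xi>) differentiable (at x)"
    and meas_grad: "\<And>i. (\<lambda>p. sgrad F (fst p) (snd p)) \<in> borel_measurable (borel \<Otimes>\<^sub>M D i)"
    and meas_J: "\<And>\<xi>. \<xi> \<in> Q \<Longrightarrow> J \<xi> \<in> borel_measurable borel"
    and f_def: "\<And>x. f x = (\<integral>\<xi>. F x \<xi> \<partial>D j)"
    and f_smooth: "L_smooth f L"
    and var: "\<And>x. (\<integral>\<^sup>+\<xi>. ennreal ((norm (sgrad F x \<xi> - grad f x))\<^sup>2) \<partial>D j) \<le> ennreal (\<sigma>\<^sup>2)"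
    and "1 \<le> t"
  shows "(\<integral>\<^sup>+\<omega>. ennreal ((norm (ross_g F (fst (ross_state W F J Q \<gamma> \<alpha> x0 (\<lambda>r i. \<omega> (r, i)) (t - 1)))
        (\<lambda>i. \<omega> (t, i)) j i))\<^sup>2) \<partial>sample_space D)
    \<le> (\<integral>\<^sup>+\<omega>. ennreal (\<sigma>\<^sup>2 + (norm (grad f (fst (ross_state W F J Q \<gamma> \<alpha> x0 (\<lambda>r i. \<omega> (r, i)) (t - 1)) i)))\<^sup>2)
        \<partial>sample_space D)"
proof -
  let ?X = "\<lambda>\<omega>. fst (ross_state W F J Q \<gamma> \<alpha> x0 (\<lambda>r i. \<omega> (r, i)) (t - 1)) i"
  let ?h = "\<lambda>y \<xi>. ennreal ((norm (sgrad F y \<xi>))\<^sup>2)"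
  have "?X \<in> borel_measurable (sample_space D)"
    by (rule measurable_ross_state[OF meas_grad meas_J])
  moreover have "?X (fun_upd \<omega> (t, j) y) = ?X \<omega>" for \<omega> y
    using \<open>1 \<le> t\<close> by (subst ross_state_cong[where \<xi>'="\<lambda>r i. \<omega> (r, i)"]) (auto simp: fun_eq_iff)
  moreover have "case_prod ?h \<in> borel_measurable (borel \<Otimes>\<^sub>M D (snd (t, j)))"
    using meas_grad[of j] by (simp add: case_prod_beta')
  ultimately have "(\<integral>\<^sup>+\<omega>. ?h (?X \<omega>) (\<omega> (t, j)) \<partial>sample_space D)
      = (\<integral>\<^sup>+\<omega>. \<integral>\<^sup>+\<xi>. ?h (?X \<omega>) \<xi> \<partial>D j \<partial>sample_space D)"
    unfolding sample_space_def using D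
    by (subst nn_integral_PiM_independent_coordinate) auto
  also have "\<dots> \<le> (\<integral>\<^sup>+\<omega>. ennreal (\<sigma>\<^sup>2 + (norm (grad f (?X \<omega>)))\<^sup>2) \<partial>sample_space D)"
    by (intro nn_integral_mono nn_integral_sq_sgrad_le[OF D F_diff meas_grad f_def f_smooth var])
  finally show ?thesis
    by (simp add: ross_g_def)
qed

lemma nn_integral_frob_ross_deviation_le:
  fixes W :: "real^'n^'n" and F :: "real^'d \<Rightarrow> 'z \<Rightarrow> real" and D :: "'n \<Rightarrow> 'z measure"
    and \<gamma> \<alpha> :: real and x0 :: "real^'d"
  assumes W: "doubly_stochastic_sym W"
    and D: "\<And>i. prob_space (D i)"
    and F_diff: "\<And>x \<xi>. (\<lambda>y. F y \<xi>) differentiable (at x)"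
    and meas_grad: "\<And>i. (\<lambda>p. sgrad F (fst p) (snd p)) \<in> borel_measurable (borel \<Otimes>\<^sub>M D i)"
    and meas_J: "\<And>\<xi>. \<xi> \<in> Q \<Longrightarrow> J \<xi> \<in> borel_measurable borel"
    and f_def: "\<And>j x. f j x = (\<integral>\<xi>. F x \<xi> \<partial>D j)"
    and f_smooth: "\<And>j. L_smooth (f j) L"
    and var: "\<And>j x. (\<integral>\<^sup>+\<xi>. ennreal ((norm (sgrad F x \<xi> - grad (f j) x))\<^sup>2) \<partial>D j) \<le> ennreal (\<sigma>\<^sup>2)"
    and t: "1 \<le> t"
  defines "xs \<equiv> \<lambda>\<omega>. fst (ross_state W F J Q \<gamma> \<alpha> x0 (\<lambda>r i. \<omega> (r, i)) (t - 1))"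
  shows "(\<integral>\<^sup>+\<omega>. ennreal ((frob_norm (cols_mat (\<lambda>i. ross_gbar W F J Q \<gamma> (xs \<omega>) (\<lambda>i. \<omega> (t, i)) i)
        - cols_mat (\<lambda>i. ross_g F (xs \<omega>) (\<lambda>i. \<omega> (t, i)) i i)))\<^sup>2) \<partial>sample_space D)
    \<le> (\<integral>\<^sup>+\<omega>. ennreal (\<Sum>i\<in>UNIV. \<Sum>j\<in>UNIV.
        gbar_weight W i j * (\<sigma>\<^sup>2 + (norm (grad (f j) (xs \<omega> i)))\<^sup>2)) \<partial>sample_space D)"
proof -
  let ?g = "\<lambda>\<omega> j i. ross_g F (xs \<omega>) (\<lambda>i. \<omega> (t, i)) j i"
  have x_meas [measurable]: "(\<lambda>\<omega>. xs \<omega> i) \<in> borel_measurable (sample_space D)" for i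
    unfolding xs_def by (rule measurable_ross_state[OF meas_grad meas_J])
  have "(\<lambda>\<omega>. \<omega> (t, j)) \<in> measurable (sample_space D) (D j)" for j
    unfolding sample_space_def using measurable_component_singleton[of "(t, j)" UNIV "\<lambda>p. D (snd p)"] by simp
  with x_meas have [measurable]: "(\<lambda>\<omega>. ?g \<omega> j i) \<in> borel_measurable (sample_space D)" for i j
    by (intro measurable_ross_g[OF meas_grad])
  from measurable_compose[OF x_meas borel_measurable_grad[OF f_smooth]]
  have [measurable]: "(\<lambda>\<omega>. grad (f j) (xs \<omega> i)) \<in> borel_measurable (sample_space D)" for i j .
  have "(\<integral>\<^sup>+\<omega>. ennreal ((frob_norm (cols_mat (\<lambda>i. ross_gbar W F J Q \<gamma> (xs \<omega>) (\<lambda>i. \<omega> (t, i)) i)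
        - cols_mat (\<lambda>i. ?g \<omega> i i)))\<^sup>2) \<partial>sample_space D)
      \<le> (\<integral>\<^sup>+\<omega>. ennreal (\<Sum>i\<in>UNIV. \<Sum>j\<in>UNIV. gbar_weight W i j * (norm (?g \<omega> j i))\<^sup>2) \<partial>sample_space D)"
    unfolding frob_norm_cols_mat_diff_sq
    by (intro nn_integral_mono ennreal_leI sum_mono norm_ross_gbar_sub_sq_le W)
  also have "\<dots> \<le> (\<integral>\<^sup>+\<omega>. ennreal (\<Sum>i\<in>UNIV. \<Sum>j\<in>UNIV.
      gbar_weight W i j * (\<sigma>\<^sup>2 + (norm (grad (f j) (xs \<omega> i)))\<^sup>2)) \<partial>sample_space D)"
  proof (rule nn_integral_double_sum_cmult_mono)
    show "(\<lambda>\<omega>. (norm (?g \<omega> j i))\<^sup>2) \<in> borel_measurable (sample_space D)" for i j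
      by measurable
    show "(\<lambda>\<omega>. \<sigma>\<^sup>2 + (norm (grad (f j) (xs \<omega> i)))\<^sup>2) \<in> borel_measurable (sample_space D)" for i j
      by measurable
    show "(\<integral>\<^sup>+\<omega>. ennreal ((norm (?g \<omega> j i))\<^sup>2) \<partial>sample_space D)
        \<le> (\<integral>\<^sup>+\<omega>. ennreal (\<sigma>\<^sup>2 + (norm (grad (f j) (xs \<omega> i)))\<^sup>2) \<partial>sample_space D)" for i j
      unfolding xs_def by (rule nn_integral_sq_ross_g_le[OF D F_diff meas_grad meas_J f_def f_smooth var t])
  qed (use gbar_weight_nonneg[OF W] in auto)
  finally show ?thesis .
qed

theorem lemma5:
  fixes W :: "real^'n^'n"
    and D :: "'n \<Rightarrow> 'z measure"
    and F :: "real^'d \<Rightarrow> 'z \<Rightarrow> real"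
    and J :: "'z \<Rightarrow> real^'d \<Rightarrow> real"
    and Q :: "'z set"
    and \<gamma> \<alpha> L \<sigma> \<zeta> \<rho> :: real
    and x0 :: "real^'d"
    and t :: nat
  defines "f \<equiv> (\<lambda>i x. \<integral>\<xi>. F x \<xi> \<partial>D i)"
  defines "FF \<equiv> (\<lambda>x. (1 / real CARD('n)) * (\<Sum>i\<in>UNIV. f i x))"
  defines "P \<equiv> sample_space D"
  defines "xs \<equiv> (\<lambda>\<omega> s. fst (ross_state W F J Q \<gamma> \<alpha> x0 (\<lambda>r i. \<omega> (r, i)) s))"
  assumes W: "doubly_stochastic_sym W"
    and D: "\<And>i. prob_space (D i)"
    and Fdiff: "\<And>x \<xi>. (\<lambda>y. F y \<xi>) differentiable (at x)"
    and Q: "finite Q"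
    and \<gamma>: "\<gamma> > 0"
    and A1: "\<And>i. L_smooth (f i) L"
    and \<sigma>: "\<sigma> > 0" and \<zeta>: "\<zeta> > 0"
    and A2_var: "\<And>i x. (\<integral>\<^sup>+\<xi>. ennreal ((norm (sgrad F x \<xi> - grad (f i) x))\<^sup>2) \<partial>D i) \<le> ennreal (\<sigma>\<^sup>2)"
    and A2_het: "\<And>i x. (norm (grad (f i) x - grad FF x))\<^sup>2 \<le> \<zeta>\<^sup>2"
    and A3: "\<rho> < 1" "spectral_gap W \<rho>"
    and meas_grad: "\<And>i. (\<lambda>p. sgrad F (fst p) (snd p)) \<in> borel_measurable (borel \<Otimes>\<^sub>M D i)"
    and meas_J: "\<And>\<xi>. \<xi> \<in> Q \<Longrightarrow> J \<xi> \<in> borel_measurable borel"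
    and t: "t \<ge> 1"
  shows "(\<integral>\<^sup>+\<omega>. ennreal ((frob_norm
            (cols_mat (\<lambda>i. ross_gbar W F J Q \<gamma> (xs \<omega> (t - 1)) (\<lambda>i. \<omega> (t, i)) i)
             - cols_mat (\<lambda>i. ross_g F (xs \<omega> (t - 1)) (\<lambda>i. \<omega> (t, i)) i i)))\<^sup>2) \<partial>P)
    \<le> ennreal (2 * CARD('n) * \<sigma>\<^sup>2 / omega_min W ^ 4 + 2 * CARD('n) * \<sigma>\<^sup>2
              + 8 * CARD('n) * \<zeta>\<^sup>2 / omega_min W ^ 4 + 8 * CARD('n) * \<zeta>\<^sup>2)
      + ennreal (16 * L\<^sup>2 / omega_min W ^ 4 + 16 * L\<^sup>2) *
          (\<Sum>i\<in>UNIV. \<integral>\<^sup>+\<omega>. ennreal ((norm (xs \<omega> (t - 1) i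
              - (1 / real CARD('n)) *\<^sub>R (\<Sum>k\<in>UNIV. xs \<omega> (t - 1) k)))\<^sup>2) \<partial>P)
      + ennreal (8 * CARD('n) / omega_min W ^ 4 + 8 * CARD('n)) *
          (\<integral>\<^sup>+\<omega>. ennreal ((norm ((1 / real CARD('n)) *\<^sub>R
              (\<Sum>i\<in>UNIV. grad (f i) (xs \<omega> (t - 1) i))))\<^sup>2) \<partial>P)"
proof -
  interpret P: prob_space "sample_space D"
    unfolding sample_space_def by (intro prob_space_PiM D)
  have f_eq: "f j x = (\<integral>\<xi>. F x \<xi> \<partial>D j)" for j x
    by (simp add: f_def)
  note deviation = nn_integral_frob_ross_deviation_le[OF W D Fdiff meas_grad meas_J f_eq A1 A2_var t]
  note expectation = P.nn_integral_sum_gbar_weight_grad_le[OF W measurable_ross_state(1)[OF meas_grad meas_J]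
      A1 A2_het[unfolded FF_def]]
  show ?thesis
    unfolding xs_def P_def by (rule order_trans[OF deviation expectation])
qed

end
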